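(* Let $r\ge 3$ and $1\le s\le r-1$ be integers. Then the automorphism group of the split Praeger-Xu graph $\mathrm{sC}(r,s)$ is $\mathrm{Aut}(\mathrm{sC}(r,s))=H$ (acting on $\mathrm{sC}(r,s)$ as described below), and $H$ acts transitively on $V\mathrm{sC}(r,s)$.
   Context: Praeger-Xu graphs: for $r\ge3$, $s\ge1$, let $V_{r,s}$ be the set of pairs $(x;\varepsilon_0\varepsilon_1\cdots\varepsilon_{s-1})$ with $x\in\mathbb{Z}_r$ and $\varepsilon_i\in\mathbb{Z}_2$; such a pair is identified with the directed walk $(x,\varepsilon_0),(x+1,\varepsilon_1),\dots,(x+s-1,\varepsilon_{s-1})$ in $\mathbb{Z}_r\times\mathbb{Z}_2$. The digraph $\vec{\mathrm{C}}(r,s)$ has vertex set $V_{r,s}$ and arcs from $(x;\varepsilon h)$ to $(x+1;h0)$ and $(x+1;h1)$ for every $\varepsilon\in\mathbb{Z}_2$ and every string $h$ of length $s-1$. $\mathrm{C}(r,s)$ is the underlying undirected ($4$-valent) graph. The partition $\mathcal{S}$ of $E\mathrm{C}(r,s)$ consists of the $4$-cycles $(x;0h)\sim(x+1;h0)\sim(x;1h)\sim(x+1;h1)\sim(x;0h)$, for $x\in\mathbb{Z}_r$ and $h$ a string in $\mathbb{Z}_2$ of length $s-1$. Splitting: for a $4$-valent graph $\Delta$ and a partition $\mathcal{C}$ of $E\Delta$ into cycles, $\mathrm{s}(\Delta,\mathcal{C})$ is the cubic graph with vertex set $\{(\alpha,C)\in V\Delta\times\mathcal{C}:\alpha\in VC\}$,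 $(\alpha,C)\sim(\beta,D)$ iff either $C\ne D$ and $\alpha=\beta$, or $C=D$ and $\alpha\sim\beta$ in $\Delta$. The split Praeger-Xu graph is $\mathrm{sC}(r,s)=\mathrm{s}(\mathrm{C}(r,s),\mathcal{S})$. The group $H$: let $H\cong C_2\wr D_r$ be the group of permutations of $\mathbb{Z}_r\times\mathbb{Z}_2$ of the form $(x,i)\mapsto(\varphi(x),i+c_x)$ with $\varphi(x)=\pm x+b$ ($b\in\mathbb{Z}_r$) and $(c_x)_{x\in\mathbb{Z}_r}\in\mathbb{Z}_2^{r}$ (generated by the transpositions $\tau_i$ swapping $(i,0),(i,1)$, the rotation $(x,i)\mapsto(x+1,i)$ and the reflection $(x,i)\mapsto(-x,i)$). An element $g\in H$ maps the walk $(x+j,\varepsilon_j)_{0\le j\le s-1}$ to the walk $((x+j,\varepsilon_j)^g)_j$, which is a forward or backward directed walk; reading it in the forward direction gives an element of $V_{r,s}$. This defines a faithful action of $H$ by automorphisms of $\mathrm{C}(r,s)$ that preserves $\mathcal{S}$, hence an action on $\mathrm{sC}(r,s)$ by $(v,C)^g=(v^g,C^g)$. *)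

theory Defs
  imports Main
begin

text \<open>Vertices of C(r,s): pairs (x, eps) with x in Z_r (represented by 0..r-1) and
  eps a bool list of length s (False = 0, True = 1).\<close>

type_synonym pxv = "nat \<times> bool list"

definition PX_V :: "nat \<Rightarrow> nat \<Rightarrow> pxv set" where
  "PX_V r s = {(x, e). x < r \<and> length e = s}"

definition PX_arc :: "nat \<Rightarrow> nat \<Rightarrow> pxv \<Rightarrow> pxv \<Rightarrow> bool" where
  "PX_arc r s u v \<longleftrightarrow> u \<in> PX_V r s \<and> v \<in> PX_V r s \<and>
     (\<exists>e h d. snd u = e # h \<and> fst v = (fst u + 1) mod r \<and> snd v = h @ [d])"

definition PX_adj :: "nat \<Rightarrow> nat \<Rightarrow> pxv \<Rightarrow> pxv \<Rightarrow> bool" where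
  "PX_adj r s u v \<longleftrightarrow> PX_arc r s u v \<or> PX_arc r s v u"

definition PX_cyc :: "nat \<Rightarrow> nat \<Rightarrow> bool list \<Rightarrow> pxv set set" where
  "PX_cyc r x h =
    (let a = (x, False # h); b = ((x + 1) mod r, h @ [False]);
         c = (x, True # h); d = ((x + 1) mod r, h @ [True])
     in {{a, b}, {b, c}, {c, d}, {d, a}})"

definition PX_S :: "nat \<Rightarrow> nat \<Rightarrow> pxv set set set" where
  "PX_S r s = {PX_cyc r x h | x h. x < r \<and> length h = s - 1}"

text \<open>Generic splitting construction s(Delta, C); a cycle is given by its edge set,
  its vertex set is the union of its edges.\<close>
definition split_V :: "'a set set set \<Rightarrow> ('a \<times> 'a set set) set" where
  "split_V Cs = {(a, C). C \<in> Cs \<and> a \<in> \<Union>C}"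

definition split_adj :: "('a \<Rightarrow> 'a \<Rightarrow> bool) \<Rightarrow> ('a \<times> 'a set set) \<Rightarrow> ('a \<times> 'a set set) \<Rightarrow> bool" where
  "split_adj adj p q \<longleftrightarrow>
     (snd p \<noteq> snd q \<and> fst p = fst q) \<or> (snd p = snd q \<and> adj (fst p) (fst q))"

definition sPX_V :: "nat \<Rightarrow> nat \<Rightarrow> (pxv \<times> pxv set set) set" where
  "sPX_V r s = split_V (PX_S r s)"

definition sPX_adj :: "nat \<Rightarrow> nat \<Rightarrow> (pxv \<times> pxv set set) \<Rightarrow> (pxv \<times> pxv set set) \<Rightarrow> bool" where
  "sPX_adj r s = split_adj (PX_adj r s)"

definition is_aut :: "'v set \<Rightarrow> ('v \<Rightarrow> 'v \<Rightarrow> bool) \<Rightarrow> ('v \<Rightarrow> 'v) \<Rightarrow> bool" where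
  "is_aut V adj f \<longleftrightarrow> bij_betw f V V \<and> (\<forall>u\<in>V. \<forall>v\<in>V. adj u v \<longleftrightarrow> adj (f u) (f v))"

text \<open>The group H = C_2 wr D_r of permutations of Z_r x Z_2:
  (x,i) maps to (phi x, i + c_x) with phi x = x + b or phi x = -x + b.\<close>
definition H_map :: "nat \<Rightarrow> bool \<Rightarrow> nat \<Rightarrow> (nat \<Rightarrow> bool) \<Rightarrow> nat \<times> bool \<Rightarrow> nat \<times> bool" where
  "H_map r neg b c = (\<lambda>(x, i).
     ((if neg then r - x mod r + b else x mod r + b) mod r, if c (x mod r) then \<not> i else i))"

definition H_grp :: "nat \<Rightarrow> (nat \<times> bool \<Rightarrow> nat \<times> bool) set" where
  "H_grp r = {H_map r neg b c | neg b c. b < r}"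

definition walk_pts :: "nat \<Rightarrow> pxv \<Rightarrow> (nat \<times> bool) list" where
  "walk_pts r v = map (\<lambda>j. ((fst v + j) mod r, snd v ! j)) [0..<length (snd v)]"

definition is_fwd :: "nat \<Rightarrow> (nat \<times> bool) list \<Rightarrow> bool" where
  "is_fwd r L \<longleftrightarrow> (\<forall>j. Suc j < length L \<longrightarrow> fst (L ! Suc j) = (fst (L ! j) + 1) mod r)"

text \<open>Action of g on V_{r,s}: map the walk pointwise and read it forward.\<close>
definition act_V :: "nat \<Rightarrow> (nat \<times> bool \<Rightarrow> nat \<times> bool) \<Rightarrow> pxv \<Rightarrow> pxv" where
  "act_V r g v = (let L = map g (walk_pts r v) in
     if is_fwd r L then (fst (hd L), map snd L) else (fst (last L), rev (map snd L)))"

definition act_sV :: "nat \<Rightarrow> (nat \<times> bool \<Rightarrow> nat \<times> bool) \<Rightarrow> pxv \<times> pxv set set \<Rightarrow> pxv \<times> pxv set set" where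
  "act_sV r g p = (act_V r g (fst p), (\<lambda>e. act_V r g ` e) ` snd p)"

end

theory Submission
  imports Defs
begin

(* The elements of H act on the walks of V(r,s) either as translations, which flip bits according
   to their level and preserve the arcs of the digraph, or as reflections, which reverse all arcs;
   both permute the cycles of S, so H acts on sC(r,s).

   Conversely, an edge of sC(r,s) lies on a 4-cycle exactly when it stays inside one cycle of S.
   Hence an automorphism f of sC(r,s) permutes the pairs {(v, C+), (v, C-)} of vertices over a
   common vertex v of C(r,s) and induces an automorphism F of C(r,s). Whether f sends C+ to C+
   is constant along arcs, so F (or F followed by a reflection) preserves every arc. Such a map is
   a translation: the level grows by one along arcs, and bits travel unchanged along walks, so the
   image of a bit depends only on its level and its value. Knowing F determines f, since the cycles
   of S are determined by their vertex sets.

   Faithfulness is read off from the images of the vertices (x; 0...0), and transitivity from the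
   freedom in the bit flips, which is complete as long as s <= r. *)

text \<open>Levels are natural numbers below \<open>r\<close>; equalities between them are decided through
  integer congruences, where \<open>int a = A mod int r\<close> says that the level \<open>a\<close> represents \<open>A\<close>.\<close>

lemma level_eq_iff_dvd:
  "int a = A mod int r \<Longrightarrow> int a' = A' mod int r \<Longrightarrow> a = a' \<longleftrightarrow> int r dvd (A - A')"
  by (metis mod_eq_dvd_iff of_nat_eq_iff)

lemma int_eq_mod_if_less: "x < r \<Longrightarrow> int x = int x mod int r"
  by (metis of_nat_mod mod_less)

lemma int_add_mod: "int ((x + b) mod r) = (int x + int b) mod int r"
  by (simp add: zmod_int)

lemma int_Suc_mod: "int a = A mod int r \<Longrightarrow> int ((a + 1) mod r) = (A + 1) mod int r"
  by (simp add: zmod_int add.commute mod_add_right_eq)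

lemma int_reflect_mod: "0 < r \<Longrightarrow> int ((r - k mod r + b) mod r) = (int b - int k) mod int r"
proof -
  assume r: "0 < r"
  then have "k mod r < r" by simp
  then have "int (r - k mod r + b) = int r - int k mod int r + int b"
    by (simp add: of_nat_diff zmod_int)
  then have "int ((r - k mod r + b) mod r) = (int r - int k mod int r + int b) mod int r"
    by (metis of_nat_mod)
  also have "\<dots> = (int b - int k) mod int r"
    by (smt (verit) mod_add_self1 mod_diff_right_eq)
  finally show ?thesis .
qed

lemma dvd_diff_of_eq_mod: "int a = A mod int r \<Longrightarrow> int r dvd (int a - A)"
  by (metis mod_eq_dvd_iff mod_mod_trivial)

lemma int_dvd_2_imp_le: "int r dvd 2 \<Longrightarrow> r \<le> 2"
  by (metis dvd_imp_le int_dvd_int_iff of_nat_numeral zero_less_numeral)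

lemma eq_Suc_mod_iff_dvd: "x' < r \<Longrightarrow> x' = (x + 1) mod r \<longleftrightarrow> int r dvd (int x' - int x - 1)"
proof -
  assume "x' < r"
  have "x' = (x + 1) mod r \<longleftrightarrow> int r dvd (int x' - (int x + 1))"
    by (rule level_eq_iff_dvd[OF int_eq_mod_if_less[OF \<open>x' < r\<close>]]) (simp add: zmod_int add.commute)
  then show ?thesis
    by (simp add: algebra_simps)
qed

lemma mod_add_right_cancel:
  "x < r \<Longrightarrow> y < r \<Longrightarrow> (x + b) mod r = (y + b) mod r \<Longrightarrow> x = (y::nat)"
proof -
  assume x: "x < r" and y: "y < r" and "(x + b) mod r = (y + b) mod r"
  then have "(int x + int b) mod int r = (int y + int b) mod int r"
    by (metis int_add_mod)
  then have "int x mod int r = int y mod int r"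
    by (simp add: mod_eq_dvd_iff)
  then show "x = y"
    using x y by (metis of_nat_mod mod_less of_nat_eq_iff)
qed

lemma mod_Suc_neq: "2 \<le> r \<Longrightarrow> x < r \<Longrightarrow> (x + 1) mod r \<noteq> (x::nat)"
  by (metis add_diff_cancel_left' le_add1 le_less_Suc_eq mod_Suc mod_less not_less_eq
      numeral_2_eq_2 order.strict_trans2 Suc_eq_plus1 Suc_lessI n_not_Suc_n zero_neq_one mod_self)

lemma mod_Suc_Suc_neq:
  fixes x r :: nat
  assumes "3 \<le> r" and "x < r"
  shows "((x + 1) mod r + 1) mod r \<noteq> x"
proof
  assume "((x + 1) mod r + 1) mod r = x"
  moreover have "int (((x + 1) mod r + 1) mod r) = ((int x + 1) mod int r + 1) mod int r"
    by (simp add: zmod_int add.commute)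
  moreover have "\<dots> = (int x + 2) mod int r"
    by (simp add: mod_add_left_eq add.assoc)
  ultimately have "int r dvd (int x + 2) - int x"
    using level_eq_iff_dvd[OF _ int_eq_mod_if_less[OF \<open>x < r\<close>]] by metis
  then have "r \<le> 2"
    by (intro int_dvd_2_imp_le) simp
  then show False
    using assms(1) by simp
qed

lemma mod_pred_Suc: "0 < r \<Longrightarrow> y < r \<Longrightarrow> ((y + r - 1) mod r + 1) mod r = (y::nat)"
proof -
  assume "0 < r" "y < r"
  then have "((y + r - 1) mod r + 1) mod r = (y + r) mod r"
    by (simp add: mod_simps)
  then show ?thesis
    using \<open>y < r\<close> by simp
qed

lemma mod_Suc_pred: "0 < r \<Longrightarrow> x < r \<Longrightarrow> ((x + 1) mod r + r - 1) mod r = (x::nat)"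
proof -
  assume "0 < r" "x < r"
  then have "((x + 1) mod r + r - 1) mod r = ((x + 1) mod r + (r - 1)) mod r"
    by simp
  also have "\<dots> = (x + 1 + (r - 1)) mod r"
    by (simp add: mod_simps)
  also have "x + 1 + (r - 1) = x + r"
    using \<open>0 < r\<close> by simp
  finally show ?thesis
    using \<open>x < r\<close> by simp
qed

definition flip_bits :: "nat \<Rightarrow> (nat \<Rightarrow> bool) \<Rightarrow> nat \<Rightarrow> bool list \<Rightarrow> bool list" where
  "flip_bits r c x e = map (\<lambda>j. e ! j \<noteq> c ((x + j) mod r)) [0..<length e]"

lemma length_flip_bits [simp]: "length (flip_bits r c x e) = length e"
  by (simp add: flip_bits_def)

lemma nth_flip_bits [simp]: "j < length e \<Longrightarrow> flip_bits r c x e ! j = (e ! j \<noteq> c ((x + j) mod r))"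
  by (simp add: flip_bits_def)

lemma flip_bits_Nil [simp]: "flip_bits r c x [] = []"
  by (simp add: flip_bits_def)

lemma flip_bits_Cons [simp]: "flip_bits r c x (a # l) = (a \<noteq> c (x mod r)) # flip_bits r c (Suc x) l"
  by (rule nth_equalityI) (auto simp: nth_Cons split: nat.splits)

lemma flip_bits_append:
  "flip_bits r c x (l1 @ l2) = flip_bits r c x l1 @ flip_bits r c (x + length l1) l2"
  by (rule nth_equalityI) (auto simp: nth_append add.assoc)

lemma flip_bits_snoc: "flip_bits r c x (l @ [d]) = flip_bits r c x l @ [d \<noteq> c ((x + length l) mod r)]"
  by (simp add: flip_bits_append)

lemma flip_bits_mod: "flip_bits r c (x mod r) l = flip_bits r c x l"
  by (rule nth_equalityI) (auto simp: mod_simps)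

lemma flip_bits_flip_bits [simp]: "flip_bits r c x (flip_bits r c x l) = l"
  by (rule nth_equalityI) auto

lemma flip_bits_inject [simp]: "flip_bits r c x l = flip_bits r c x l' \<longleftrightarrow> l = l'"
  by (metis flip_bits_flip_bits)

lemma tl_flip_bits: "tl (flip_bits r c x l) = flip_bits r c (Suc x) (tl l)"
  by (cases l) auto

lemma butlast_flip_bits: "butlast (flip_bits r c x l) = flip_bits r c x (butlast l)"
  by (cases l rule: rev_cases) (auto simp: flip_bits_snoc)

lemma flip_bits_False [simp]: "flip_bits r (\<lambda>_. False) x l = l"
  by (rule nth_equalityI) auto

text \<open>A reflection reverses a walk, so read forwards its image starts at the image
  \<open>b - (x + s - 1)\<close> of the last point of the walk.\<close>

definition px_shift :: "nat \<Rightarrow> nat \<Rightarrow> (nat \<Rightarrow> bool) \<Rightarrow> pxv \<Rightarrow> pxv" where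
  "px_shift r b c v = ((fst v + b) mod r, flip_bits r c (fst v) (snd v))"

definition px_reflect :: "nat \<Rightarrow> nat \<Rightarrow> (nat \<Rightarrow> bool) \<Rightarrow> pxv \<Rightarrow> pxv" where
  "px_reflect r b c v =
    ((r - (fst v + length (snd v) - 1) mod r + b) mod r, rev (flip_bits r c (fst v) (snd v)))"

lemma act_V_shift:
  assumes "0 < r" and "e \<noteq> []"
  shows "act_V r (H_map r False b c) (x, e) = px_shift r b c (x, e)"
proof -
  let ?L = "map (H_map r False b c) (walk_pts r (x, e))"
  have L: "?L = map (\<lambda>j. (((x + j) mod r + b) mod r, e ! j \<noteq> c ((x + j) mod r))) [0..<length e]"
    by (simp add: walk_pts_def H_map_def)
  have "is_fwd r ?L"
    unfolding is_fwd_def L by (auto simp: mod_simps)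
  moreover have "hd ?L = ((x + b) mod r, e ! 0 \<noteq> c (x mod r))"
    using assms unfolding L by (simp add: hd_map hd_upt mod_simps)
  moreover have "map snd ?L = flip_bits r c x e"
    unfolding L flip_bits_def by simp
  ultimately show ?thesis
    by (simp add: act_V_def px_shift_def Let_def)
qed

lemma reflect_level_Suc_neq:
  fixes r x b :: nat
  assumes "3 \<le> r"
  shows "(r - (x + 1) mod r + b) mod r \<noteq> ((r - x mod r + b) mod r + 1) mod r"
proof
  assume eq: "(r - (x + 1) mod r + b) mod r = ((r - x mod r + b) mod r + 1) mod r"
  have "(r - (x + 1) mod r + b) mod r = ((r - x mod r + b) mod r + 1) mod r
      \<longleftrightarrow> int r dvd ((int b - int (x + 1)) - (int b - int x + 1))"
    using assms by (intro level_eq_iff_dvd int_reflect_mod int_Suc_mod) simp_all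
  then have "int r dvd 2"
    using eq by (simp add: algebra_simps)
  then show False
    using int_dvd_2_imp_le assms by fastforce
qed

lemma act_V_reflect:
  assumes "3 \<le> r" and "e \<noteq> []"
  shows "act_V r (H_map r True b c) (x, e) = px_reflect r b c (x, e)"
proof -
  let ?L = "map (H_map r True b c) (walk_pts r (x, e))"
  have L: "?L = map (\<lambda>j. ((r - (x + j) mod r + b) mod r, e ! j \<noteq> c ((x + j) mod r))) [0..<length e]"
    by (simp add: walk_pts_def H_map_def)
  have snd_L: "map snd ?L = flip_bits r c x e"
    unfolding L flip_bits_def by simp
  show ?thesis
  proof (cases "length e = 1")
    case True
    then obtain a where "e = [a]"
      by (cases e) auto
    then show ?thesis
      by (simp add: act_V_def px_reflect_def is_fwd_def walk_pts_def H_map_def)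
  next
    case False
    then have len: "2 \<le> length e"
      using assms(2) by (cases e) (auto simp: Suc_le_eq)
    have "\<not> is_fwd r ?L"
    proof
      assume "is_fwd r ?L"
      moreover have "Suc 0 < length ?L"
        using len by (simp add: walk_pts_def)
      ultimately have "fst (?L ! Suc 0) = (fst (?L ! 0) + 1) mod r"
        unfolding is_fwd_def by blast
      moreover have "fst (?L ! 0) = (r - x mod r + b) mod r"
        and "fst (?L ! Suc 0) = (r - (x + 1) mod r + b) mod r"
        using len assms(2) unfolding L by simp_all
      ultimately show False
        using reflect_level_Suc_neq[OF assms(1), of x b] by simp
    qed
    moreover have "last ?L = ((r - (x + length e - 1) mod r + b) mod r,
        e ! (length e - 1) \<noteq> c ((x + (length e - 1)) mod r))"
      using len assms(2) unfolding L by (simp add: last_map)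
    ultimately show ?thesis
      using snd_L by (simp add: act_V_def px_reflect_def Let_def)
  qed
qed

lemma mem_PX_V [simp]: "(x, e) \<in> PX_V r s \<longleftrightarrow> x < r \<and> length e = s"
  by (simp add: PX_V_def)

lemma PX_V_iff: "v \<in> PX_V r s \<longleftrightarrow> fst v < r \<and> length (snd v) = s"
  by (cases v) simp

lemma PX_adj_sym: "PX_adj r s u w \<longleftrightarrow> PX_adj r s w u"
  unfolding PX_adj_def by blast

locale praeger_xu =
  fixes r s :: nat
  assumes r_ge_3: "3 \<le> r" and s_pos: "1 \<le> s"
begin

lemma r_pos: "0 < r"
  using r_ge_3 by simp

lemma PX_arc_iff: "PX_arc r s u w \<longleftrightarrow> u \<in> PX_V r s \<and> w \<in> PX_V r s \<and>
   fst w = (fst u + 1) mod r \<and> tl (snd u) = butlast (snd w)"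
proof
  assume "PX_arc r s u w"
  then show "u \<in> PX_V r s \<and> w \<in> PX_V r s \<and> fst w = (fst u + 1) mod r \<and> tl (snd u) = butlast (snd w)"
    unfolding PX_arc_def by auto
next
  assume a: "u \<in> PX_V r s \<and> w \<in> PX_V r s \<and> fst w = (fst u + 1) mod r \<and> tl (snd u) = butlast (snd w)"
  then have "snd u \<noteq> []" and "snd w \<noteq> []"
    using s_pos by (auto simp: PX_V_iff)
  then have "snd u = hd (snd u) # tl (snd u)" and "snd w = butlast (snd w) @ [last (snd w)]"
    by simp_all
  then show "PX_arc r s u w"
    unfolding PX_arc_def using a by metis
qed

lemma PX_arc_level_neq: "PX_arc r s u w \<Longrightarrow> fst u \<noteq> fst w"
proof -
  assume "PX_arc r s u w"
  then have "fst u < r" and "fst w = (fst u + 1) mod r"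
    by (simp_all add: PX_arc_iff PX_V_iff)
  then show ?thesis
    using mod_Suc_neq[of r "fst u"] r_ge_3 by simp
qed

lemma PX_arc_asym: "PX_arc r s u w \<Longrightarrow> \<not> PX_arc r s w u"
  by (metis PX_arc_iff PX_V_iff mod_Suc_Suc_neq r_ge_3)

lemma PX_adj_level_neq: "PX_adj r s u w \<Longrightarrow> fst u \<noteq> fst w"
  unfolding PX_adj_def using PX_arc_level_neq by metis

lemma px_shift_in_V: "v \<in> PX_V r s \<Longrightarrow> px_shift r b c v \<in> PX_V r s"
  using r_pos by (cases v) (simp add: px_shift_def)

lemma inj_on_px_shift: "inj_on (px_shift r b c) (PX_V r s)"
proof
  fix u w
  assume "u \<in> PX_V r s" "w \<in> PX_V r s" and eq: "px_shift r b c u = px_shift r b c w"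
  moreover have "(fst u + b) mod r = (fst w + b) mod r"
    using eq by (simp add: px_shift_def prod_eq_iff)
  ultimately have "fst u = fst w"
    using mod_add_right_cancel[of "fst u" r "fst w" b] by (simp add: PX_V_iff)
  then show "u = w"
    using eq by (simp add: px_shift_def prod_eq_iff)
qed

lemma px_shift_arc_iff:
  assumes u: "u \<in> PX_V r s" and w: "w \<in> PX_V r s"
  shows "PX_arc r s (px_shift r b c u) (px_shift r b c w) \<longleftrightarrow> PX_arc r s u w"
proof -
  obtain x e x' e' where ue: "u = (x, e)" and we: "w = (x', e')"
    by fastforce
  have x': "x' < r"
    using w we by simp
  have levels: "(x' + b) mod r = ((x + b) mod r + 1) mod r \<longleftrightarrow> int r dvd (int x' - int x - 1)"
  proof -
    have "(x' + b) mod r = ((x + b) mod r + 1) mod r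
        \<longleftrightarrow> int r dvd ((int x' + int b) - (int x + int b + 1))"
      by (rule level_eq_iff_dvd[OF int_add_mod int_Suc_mod[OF int_add_mod]])
    then show ?thesis
      by (simp add: algebra_simps)
  qed
  have bits: "tl (flip_bits r c x e) = butlast (flip_bits r c x' e') \<longleftrightarrow> tl e = butlast e'"
    if "x' = (x + 1) mod r"
    using that by (simp add: tl_flip_bits butlast_flip_bits flip_bits_mod[of r c "Suc x", symmetric])
  have "PX_arc r s (px_shift r b c u) (px_shift r b c w) \<longleftrightarrow>
      (x' + b) mod r = ((x + b) mod r + 1) mod r \<and> tl (flip_bits r c x e) = butlast (flip_bits r c x' e')"
    using px_shift_in_V[OF u] px_shift_in_V[OF w] unfolding PX_arc_iff by (simp add: ue we px_shift_def)
  moreover have "PX_arc r s u w \<longleftrightarrow> x' = (x + 1) mod r \<and> tl e = butlast e'"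
    using u w unfolding PX_arc_iff by (simp add: ue we)
  ultimately show ?thesis
    using levels bits eq_Suc_mod_iff_dvd[OF x', of x] by blast
qed

lemma px_shift_adj_iff:
  "u \<in> PX_V r s \<Longrightarrow> w \<in> PX_V r s \<Longrightarrow>
    PX_adj r s (px_shift r b c u) (px_shift r b c w) \<longleftrightarrow> PX_adj r s u w"
  by (simp add: PX_adj_def px_shift_arc_iff)

lemma int_reflect_level:
  "length e = s \<Longrightarrow> int ((r - (x + length e - 1) mod r + b) mod r) = (int b - int x - int s + 1) mod int r"
  using int_reflect_mod[OF r_pos, of "x + length e - 1" b] s_pos by (simp add: of_nat_diff algebra_simps)

lemma px_reflect_in_V: "v \<in> PX_V r s \<Longrightarrow> px_reflect r b c v \<in> PX_V r s"
  using r_pos by (cases v) (simp add: px_reflect_def)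

lemma inj_on_px_reflect: "inj_on (px_reflect r b c) (PX_V r s)"
proof
  fix u w
  assume u: "u \<in> PX_V r s" and w: "w \<in> PX_V r s" and eq: "px_reflect r b c u = px_reflect r b c w"
  obtain x e x' e' where ue: "u = (x, e)" and we: "w = (x', e')"
    by fastforce
  have len: "length e = s" "length e' = s"
    using u w by (simp_all add: ue we)
  have "(r - (x + length e - 1) mod r + b) mod r = (r - (x' + length e' - 1) mod r + b) mod r"
    using eq by (simp add: ue we px_reflect_def)
  then have "int r dvd ((int b - int x - int s + 1) - (int b - int x' - int s + 1))"
    using level_eq_iff_dvd[OF int_reflect_level[OF len(1)] int_reflect_level[OF len(2)]] by blast
  then have "int r dvd (int x - int x')"
    by (simp add: dvd_diff_commute algebra_simps)
  then have "x = x'"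
    using u w level_eq_iff_dvd[OF int_eq_mod_if_less[of x r] int_eq_mod_if_less[of x' r]]
    by (simp add: ue we)
  then show "u = w"
    using eq by (simp add: ue we px_reflect_def)
qed

lemma px_reflect_arc_iff:
  assumes u: "u \<in> PX_V r s" and w: "w \<in> PX_V r s"
  shows "PX_arc r s (px_reflect r b c w) (px_reflect r b c u) \<longleftrightarrow> PX_arc r s u w"
proof -
  obtain x e x' e' where ue: "u = (x, e)" and we: "w = (x', e')"
    by fastforce
  have x': "x' < r" and le: "length e = s" and le': "length e' = s"
    using u w ue we by auto
  have levels: "(r - (x + length e - 1) mod r + b) mod r
        = ((r - (x' + length e' - 1) mod r + b) mod r + 1) mod r
      \<longleftrightarrow> int r dvd (int x' - int x - 1)"
  proof -
    have "(r - (x + length e - 1) mod r + b) mod r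
        = ((r - (x' + length e' - 1) mod r + b) mod r + 1) mod r
      \<longleftrightarrow> int r dvd ((int b - int x - int s + 1) - (int b - int x' - int s + 1 + 1))"
      by (rule level_eq_iff_dvd[OF int_reflect_level[OF le] int_Suc_mod[OF int_reflect_level[OF le']]])
    then show ?thesis
      by (simp add: algebra_simps)
  qed
  have bits: "tl (rev (flip_bits r c x' e')) = butlast (rev (flip_bits r c x e)) \<longleftrightarrow> tl e = butlast e'"
    if "x' = (x + 1) mod r"
  proof -
    have "tl (rev l) = rev (butlast l)" for l :: "bool list"
      by (metis butlast_rev rev_rev_ident)
    then show ?thesis
      using that
      by (auto simp: tl_flip_bits butlast_flip_bits flip_bits_mod[of r c "Suc x", symmetric])
  qed
  have "PX_arc r s (px_reflect r b c w) (px_reflect r b c u) \<longleftrightarrow>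
      (r - (x + length e - 1) mod r + b) mod r = ((r - (x' + length e' - 1) mod r + b) mod r + 1) mod r
      \<and> tl (rev (flip_bits r c x' e')) = butlast (rev (flip_bits r c x e))"
    using px_reflect_in_V[OF u] px_reflect_in_V[OF w] r_pos le le' unfolding PX_arc_iff
    by (simp add: ue we px_reflect_def)
  moreover have "PX_arc r s u w \<longleftrightarrow> x' = (x + 1) mod r \<and> tl e = butlast e'"
    using u w unfolding PX_arc_iff by (simp add: ue we)
  ultimately show ?thesis
    using levels bits eq_Suc_mod_iff_dvd[OF x', of x] by blast
qed

lemma px_reflect_adj_iff:
  "u \<in> PX_V r s \<Longrightarrow> w \<in> PX_V r s \<Longrightarrow>
    PX_adj r s (px_reflect r b c u) (px_reflect r b c w) \<longleftrightarrow> PX_adj r s u w"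
  by (auto simp: PX_adj_def px_reflect_arc_iff)

lemma px_reflect_0_involutive:
  assumes v: "v \<in> PX_V r s"
  shows "px_reflect r 0 (\<lambda>_. False) (px_reflect r 0 (\<lambda>_. False) v) = v"
proof -
  obtain x e where ve: "v = (x, e)"
    by fastforce
  have x: "x < r" and e: "length e = s"
    using v ve by auto
  define x' where "x' = (r - (x + length e - 1) mod r + 0) mod r"
  have "int r dvd (int x' - (int 0 - int x - int s + 1))"
    unfolding x'_def by (rule dvd_diff_of_eq_mod[OF int_reflect_level[OF e]])
  moreover have "(r - (x' + length e - 1) mod r + 0) mod r = x
      \<longleftrightarrow> int r dvd ((int 0 - int x' - int s + 1) - int x)"
    by (rule level_eq_iff_dvd[OF int_reflect_level[OF e] int_eq_mod_if_less[OF x]])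
  moreover have "(int 0 - int x' - int s + 1) - int x = - (int x' - (int 0 - int x - int s + 1))"
    by simp
  ultimately have "(r - (x' + length e - 1) mod r + 0) mod r = x"
    by (metis dvd_minus_iff)
  then show ?thesis
    using e by (simp add: px_reflect_def ve x'_def)
qed

lemma px_reflect_0_px_shift:
  assumes v: "v \<in> PX_V r s" and b: "b < r"
  shows "px_reflect r 0 (\<lambda>_. False) (px_shift r b c v) = px_reflect r ((r - b) mod r) c v"
proof -
  obtain x e where ve: "v = (x, e)"
    by fastforce
  have e: "length e = s" and e': "length (flip_bits r c x e) = s"
    using v ve by auto
  have "(r - ((x + b) mod r + length (flip_bits r c x e) - 1) mod r + 0) mod r
      = (r - (x + length e - 1) mod r + (r - b) mod r) mod r
    \<longleftrightarrow> int r dvd ((int 0 - int ((x + b) mod r) - int s + 1) - (int ((r - b) mod r) - int x - int s + 1))"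
    by (rule level_eq_iff_dvd[OF int_reflect_level[OF e'] int_reflect_level[OF e]])
  moreover have "int r dvd (int ((x + b) mod r) - (int x + int b))"
    by (rule dvd_diff_of_eq_mod) (simp add: zmod_int)
  moreover have "int r dvd (int ((r - b) mod r) - (int r - int b))"
    by (rule dvd_diff_of_eq_mod) (use b in \<open>simp add: zmod_int of_nat_diff\<close>)
  moreover have "(int 0 - int ((x + b) mod r) - int s + 1) - (int ((r - b) mod r) - int x - int s + 1)
     = - (int ((x + b) mod r) - (int x + int b)) - (int ((r - b) mod r) - (int r - int b)) - int r"
    by (simp add: algebra_simps)
  ultimately have "(r - ((x + b) mod r + length (flip_bits r c x e) - 1) mod r + 0) mod r
      = (r - (x + length e - 1) mod r + (r - b) mod r) mod r"
    by (metis dvd_diff dvd_minus_iff dvd_refl)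
  then show ?thesis
    by (simp add: px_reflect_def px_shift_def ve)
qed

end

section \<open>The cycle partition S\<close>

definition cyc_src :: "nat \<Rightarrow> bool list \<Rightarrow> bool \<Rightarrow> pxv" where
  "cyc_src x h i = (x, i # h)"

definition cyc_tgt :: "nat \<Rightarrow> nat \<Rightarrow> bool list \<Rightarrow> bool \<Rightarrow> pxv" where
  "cyc_tgt r x h i = ((x + 1) mod r, h @ [i])"

lemma PX_cyc_eq:
  "PX_cyc r x h =
    {{cyc_src x h False, cyc_tgt r x h False}, {cyc_tgt r x h False, cyc_src x h True},
     {cyc_src x h True, cyc_tgt r x h True}, {cyc_tgt r x h True, cyc_src x h False}}"
  by (simp add: PX_cyc_def Let_def cyc_src_def cyc_tgt_def)

lemma PX_cyc_verts:
  "\<Union>(PX_cyc r x h) = {cyc_src x h False, cyc_tgt r x h False, cyc_src x h True, cyc_tgt r x h True}"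
  unfolding PX_cyc_eq by auto

lemma mem_PX_S_iff: "C \<in> PX_S r s \<longleftrightarrow> (\<exists>x h. x < r \<and> length h = s - 1 \<and> C = PX_cyc r x h)"
  unfolding PX_S_def by blast

text \<open>The two cycles of S through \<open>v\<close>: \<open>v\<close> is the source of two arcs of \<open>cyc_out r v\<close> and
  the target of two arcs of \<open>cyc_in r v\<close>.\<close>

definition cyc_out :: "nat \<Rightarrow> pxv \<Rightarrow> pxv set set" where
  "cyc_out r v = PX_cyc r (fst v) (tl (snd v))"

definition cyc_in :: "nat \<Rightarrow> pxv \<Rightarrow> pxv set set" where
  "cyc_in r v = PX_cyc r ((fst v + r - 1) mod r) (butlast (snd v))"

context praeger_xu
begin

lemma mem_PX_cyc_iff:
  assumes h: "length h = s - 1" and v: "v \<in> PX_V r s"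
  shows "v \<in> \<Union>(PX_cyc r x h) \<longleftrightarrow>
    (fst v = x \<and> tl (snd v) = h) \<or> (fst v = (x + 1) mod r \<and> butlast (snd v) = h)"
proof -
  obtain y e where ve: "v = (y, e)"
    by fastforce
  have len: "length e = Suc (length h)"
    using v h s_pos by (simp add: ve)
  have "(e = False # h \<or> e = True # h) \<longleftrightarrow> tl e = h"
    using len by (cases e) auto
  moreover have "(e = h @ [False] \<or> e = h @ [True]) \<longleftrightarrow> butlast e = h"
    using len by (cases e rule: rev_cases) auto
  ultimately show ?thesis
    unfolding PX_cyc_verts by (auto simp: ve cyc_src_def cyc_tgt_def)
qed

lemma PX_cyc_verts_subset: "x < r \<Longrightarrow> length h = s - 1 \<Longrightarrow> \<Union>(PX_cyc r x h) \<subseteq> PX_V r s"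
  unfolding PX_cyc_verts using s_pos r_pos by (auto simp: cyc_src_def cyc_tgt_def)

lemma PX_S_verts_subset: "C \<in> PX_S r s \<Longrightarrow> \<Union>C \<subseteq> PX_V r s"
  using PX_cyc_verts_subset by (auto simp: mem_PX_S_iff)

lemma PX_cyc_eq_if_verts_subset:
  assumes x: "x < r" and h: "length h = s - 1" and x': "x' < r" and h': "length h' = s - 1"
    and sub: "\<Union>(PX_cyc r x h) \<subseteq> \<Union>(PX_cyc r x' h')"
  shows "x = x' \<and> h = h'"
proof (rule ccontr)
  assume neq: "\<not> (x = x' \<and> h = h')"
  have V: "cyc_src x h False \<in> PX_V r s" "cyc_tgt r x h False \<in> PX_V r s"
    using PX_cyc_verts_subset[OF x h] unfolding PX_cyc_verts by blast+
  have "cyc_src x h False \<in> \<Union>(PX_cyc r x' h')" and "cyc_tgt r x h False \<in> \<Union>(PX_cyc r x' h')"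
    using sub unfolding PX_cyc_verts by blast+
  then have A: "(x = x' \<and> h = h') \<or> (x = (x' + 1) mod r \<and> butlast (False # h) = h')"
    and B: "((x + 1) mod r = x' \<and> tl (h @ [False]) = h') \<or> (x + 1) mod r = (x' + 1) mod r"
    using mem_PX_cyc_iff[OF h' V(1)] mem_PX_cyc_iff[OF h' V(2)]
    by (auto simp: cyc_src_def cyc_tgt_def)
  from A neq have x_eq: "x = (x' + 1) mod r"
    by blast
  from B show False
  proof
    assume "(x + 1) mod r = x' \<and> tl (h @ [False]) = h'"
    then have "((x' + 1) mod r + 1) mod r = x'"
      using x_eq by simp
    then show False
      using mod_Suc_Suc_neq[OF r_ge_3 x'] by simp
  next
    assume "(x + 1) mod r = (x' + 1) mod r"
    then have "x = x'"
      using mod_add_right_cancel[OF x x'] by blast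
    then show False
      using x_eq mod_Suc_neq[of r x'] r_ge_3 x' by simp
  qed
qed

lemma PX_S_eq_if_verts_subset: "C \<in> PX_S r s \<Longrightarrow> D \<in> PX_S r s \<Longrightarrow> \<Union>C \<subseteq> \<Union>D \<Longrightarrow> C = D"
  unfolding mem_PX_S_iff using PX_cyc_eq_if_verts_subset by blast

lemma cyc_out_in_PX_S: "v \<in> PX_V r s \<Longrightarrow> cyc_out r v \<in> PX_S r s"
proof -
  assume "v \<in> PX_V r s"
  then have "fst v < r" and "length (tl (snd v)) = s - 1"
    by (simp_all add: PX_V_iff)
  then show ?thesis
    unfolding mem_PX_S_iff cyc_out_def by blast
qed

lemma cyc_in_in_PX_S: "v \<in> PX_V r s \<Longrightarrow> cyc_in r v \<in> PX_S r s"
proof -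
  assume "v \<in> PX_V r s"
  then have "(fst v + r - 1) mod r < r" and "length (butlast (snd v)) = s - 1"
    using r_pos by (simp_all add: PX_V_iff)
  then show ?thesis
    unfolding mem_PX_S_iff cyc_in_def by blast
qed

lemma mem_cyc_out: "v \<in> PX_V r s \<Longrightarrow> v \<in> \<Union>(cyc_out r v)"
  unfolding cyc_out_def using mem_PX_cyc_iff by (simp add: PX_V_iff)

lemma mem_cyc_in: "v \<in> PX_V r s \<Longrightarrow> v \<in> \<Union>(cyc_in r v)"
  unfolding cyc_in_def using mem_PX_cyc_iff mod_pred_Suc[OF r_pos] by (simp add: PX_V_iff)

lemma cyc_out_neq_cyc_in: "v \<in> PX_V r s \<Longrightarrow> cyc_out r v \<noteq> cyc_in r v"
proof
  assume v: "v \<in> PX_V r s" and eq: "cyc_out r v = cyc_in r v"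
  then have "fst v = (fst v + r - 1) mod r"
    using PX_cyc_eq_if_verts_subset[of "fst v" "tl (snd v)" "(fst v + r - 1) mod r" "butlast (snd v)"]
      r_pos
    unfolding cyc_out_def cyc_in_def by (simp add: PX_V_iff)
  then have "(fst v + 1) mod r = fst v"
    using mod_pred_Suc[OF r_pos] v by (metis PX_V_iff)
  then show False
    using mod_Suc_neq[of r "fst v"] r_ge_3 v by (simp add: PX_V_iff)
qed

lemma PX_S_cases:
  assumes C: "C \<in> PX_S r s" and v: "v \<in> PX_V r s" and vC: "v \<in> \<Union>C"
  shows "C = cyc_out r v \<or> C = cyc_in r v"
proof -
  obtain x h where x: "x < r" and h: "length h = s - 1" and C_eq: "C = PX_cyc r x h"
    using C by (auto simp: mem_PX_S_iff)
  have "(fst v = x \<and> tl (snd v) = h) \<or> (fst v = (x + 1) mod r \<and> butlast (snd v) = h)"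
    using mem_PX_cyc_iff[OF h v] vC C_eq by simp
  then show ?thesis
  proof
    assume "fst v = (x + 1) mod r \<and> butlast (snd v) = h"
    moreover have "x = ((x + 1) mod r + r - 1) mod r"
      using mod_Suc_pred[OF r_pos x] by simp
    ultimately show ?thesis
      by (simp add: C_eq cyc_in_def)
  qed (simp add: C_eq cyc_out_def)
qed

lemma PX_arc_cyc_out_eq_cyc_in: "PX_arc r s u w \<Longrightarrow> cyc_out r u = cyc_in r w"
  using mod_Suc_pred[OF r_pos] by (auto simp: PX_arc_iff PX_V_iff cyc_out_def cyc_in_def)

lemma PX_arc_if_adj_in_cyc_out:
  assumes v: "v \<in> PX_V r s" and w: "w \<in> \<Union>(cyc_out r v)" and adj: "PX_adj r s v w"
  shows "PX_arc r s v w"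
proof -
  have wV: "w \<in> PX_V r s"
    using adj unfolding PX_adj_def PX_arc_def by auto
  have "fst w \<noteq> fst v"
    using PX_adj_level_neq[OF adj] by simp
  then have "fst w = (fst v + 1) mod r \<and> butlast (snd w) = tl (snd v)"
    using w mem_PX_cyc_iff[of "tl (snd v)" w "fst v"] v wV unfolding cyc_out_def
    by (simp add: PX_V_iff)
  then show ?thesis
    using v wV by (simp add: PX_arc_iff)
qed

lemma PX_arc_if_adj_in_cyc_in:
  assumes v: "v \<in> PX_V r s" and w: "w \<in> \<Union>(cyc_in r v)" and adj: "PX_adj r s v w"
  shows "PX_arc r s w v"
proof -
  have wV: "w \<in> PX_V r s"
    using adj unfolding PX_adj_def PX_arc_def by auto
  have pred: "((fst v + r - 1) mod r + 1) mod r = fst v"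
    using mod_pred_Suc[OF r_pos] v by (simp add: PX_V_iff)
  have "fst w \<noteq> fst v"
    using PX_adj_level_neq[OF adj] by simp
  then have "fst w = (fst v + r - 1) mod r \<and> tl (snd w) = butlast (snd v)"
    using w mem_PX_cyc_iff[of "butlast (snd v)" w "(fst v + r - 1) mod r"] v wV pred
    unfolding cyc_in_def by (auto simp: PX_V_iff)
  then show ?thesis
    using v wV pred by (simp add: PX_arc_iff)
qed

lemma PX_cyc_arc:
  "x < r \<Longrightarrow> length h = s - 1 \<Longrightarrow> PX_arc r s (cyc_src x h i) (cyc_tgt r x h j)"
  using s_pos r_pos by (simp add: PX_arc_iff cyc_src_def cyc_tgt_def)

lemma PX_cyc_distinct:
  "x < r \<Longrightarrow> distinct [cyc_src x h False, cyc_tgt r x h False, cyc_src x h True, cyc_tgt r x h True]"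
  using mod_Suc_neq[of r x] r_ge_3 by (auto simp: cyc_src_def cyc_tgt_def)

end

section \<open>The cycles of S inside sC(r,s)\<close>

lemma C4_edge_on_4cycle:
  assumes "distinct [a, b, c, d]" and "R a b" "R b c" "R c d" "R d a"
    and sym: "\<And>x y. R x y \<Longrightarrow> R y x" and "\<not> R a c" "\<not> R b d" and "\<And>x. \<not> R x x"
    and "x \<in> {a, b, c, d}" "y \<in> {a, b, c, d}" "R x y"
  shows "\<exists>u\<in>{a, b, c, d}. \<exists>w\<in>{a, b, c, d}. distinct [x, y, u, w] \<and> R y u \<and> R u w \<and> R w x"
proof -
  have "R b a" "R c b" "R d c" "R a d" "\<not> R c a" "\<not> R d b"
    using assms sym by blast+
  then show ?thesis
    using assms by simp (elim disjE; simp; blast)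
qed

definition on_4cycle :: "nat \<Rightarrow> nat \<Rightarrow> pxv \<times> pxv set set \<Rightarrow> pxv \<times> pxv set set \<Rightarrow> bool" where
  "on_4cycle r s p q \<longleftrightarrow> (\<exists>u\<in>sPX_V r s. \<exists>w\<in>sPX_V r s. distinct [p, q, u, w] \<and>
      sPX_adj r s q u \<and> sPX_adj r s u w \<and> sPX_adj r s w p)"

lemma mem_sPX_V_iff: "p \<in> sPX_V r s \<longleftrightarrow> snd p \<in> PX_S r s \<and> fst p \<in> \<Union>(snd p)"
  by (cases p) (simp add: sPX_V_def split_V_def)

lemma sPX_adj_iff:
  "sPX_adj r s p q \<longleftrightarrow>
    (snd p \<noteq> snd q \<and> fst p = fst q) \<or> (snd p = snd q \<and> PX_adj r s (fst p) (fst q))"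
  by (simp add: sPX_adj_def split_adj_def)

context praeger_xu
begin

lemma PX_cyc_edge_on_4cycle:
  assumes x: "x < r" and h: "length h = s - 1"
    and a: "a \<in> \<Union>(PX_cyc r x h)" and b: "b \<in> \<Union>(PX_cyc r x h)" and ab: "PX_adj r s a b"
  shows "\<exists>u\<in>\<Union>(PX_cyc r x h). \<exists>w\<in>\<Union>(PX_cyc r x h). distinct [a, b, u, w] \<and>
     PX_adj r s b u \<and> PX_adj r s u w \<and> PX_adj r s w a"
proof -
  have "\<not> PX_adj r s (cyc_src x h False) (cyc_src x h True)"
    and "\<not> PX_adj r s (cyc_tgt r x h False) (cyc_tgt r x h True)"
    using PX_adj_level_neq by (force simp: cyc_src_def cyc_tgt_def)+
  moreover have "PX_adj r s (cyc_src x h i) (cyc_tgt r x h j)"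
    and "PX_adj r s (cyc_tgt r x h j) (cyc_src x h i)" for i j
    using PX_cyc_arc[OF x h] by (auto simp: PX_adj_def)
  moreover have "\<not> PX_adj r s z z" for z
    using PX_adj_level_neq by blast
  ultimately show ?thesis
    using a b ab PX_cyc_distinct[OF x] PX_adj_sym[of r s] unfolding PX_cyc_verts
    by (intro C4_edge_on_4cycle[where R = "PX_adj r s"]) auto
qed

lemma fst_in_PX_V: "p \<in> sPX_V r s \<Longrightarrow> fst p \<in> PX_V r s"
  using PX_S_verts_subset by (auto simp: mem_sPX_V_iff)

lemma mem_sPX_V_pair:
  "v \<in> PX_V r s \<Longrightarrow> (v, C) \<in> sPX_V r s \<longleftrightarrow> C = cyc_out r v \<or> C = cyc_in r v"
  unfolding mem_sPX_V_iff fst_conv snd_conv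
  using PX_S_cases[of C v] cyc_out_in_PX_S[of v] cyc_in_in_PX_S[of v] mem_cyc_out[of v] mem_cyc_in[of v]
  by blast

lemma on_4cycle_if_same_cycle:
  assumes p: "p \<in> sPX_V r s" and q: "q \<in> sPX_V r s" and pq: "sPX_adj r s p q" and eq: "snd p = snd q"
  shows "on_4cycle r s p q"
proof -
  obtain x h where x: "x < r" and h: "length h = s - 1" and C: "snd p = PX_cyc r x h"
    using p by (auto simp: mem_sPX_V_iff mem_PX_S_iff)
  have "fst p \<in> \<Union>(PX_cyc r x h)" and "fst q \<in> \<Union>(PX_cyc r x h)"
    using p q eq C by (auto simp: mem_sPX_V_iff)
  moreover have "PX_adj r s (fst p) (fst q)"
    using pq eq by (simp add: sPX_adj_iff)
  ultimately obtain u w where u: "u \<in> \<Union>(PX_cyc r x h)" and w: "w \<in> \<Union>(PX_cyc r x h)"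
    and d: "distinct [fst p, fst q, u, w]"
    and adj: "PX_adj r s (fst q) u" "PX_adj r s u w" "PX_adj r s w (fst p)"
    using PX_cyc_edge_on_4cycle[OF x h] by blast
  have "(u, snd p) \<in> sPX_V r s" "(w, snd p) \<in> sPX_V r s"
    using u w p C by (auto simp: mem_sPX_V_iff)
  moreover have "distinct [p, q, (u, snd p), (w, snd p)]"
    using d eq by (cases p, cases q) auto
  moreover have "sPX_adj r s q (u, snd p)" "sPX_adj r s (u, snd p) (w, snd p)" "sPX_adj r s (w, snd p) p"
    using adj eq by (auto simp: sPX_adj_iff)
  ultimately show ?thesis
    unfolding on_4cycle_def by blast
qed

lemma sPX_adj_sym: "sPX_adj r s p q \<longleftrightarrow> sPX_adj r s q p"
  using PX_adj_sym by (auto simp: sPX_adj_iff)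

lemma sPX_adj_cycle_neq_unique:
  assumes "p \<in> sPX_V r s" "q \<in> sPX_V r s" "q' \<in> sPX_V r s"
    and "sPX_adj r s p q" "sPX_adj r s p q'" "snd q \<noteq> snd p" "snd q' \<noteq> snd p"
  shows "q = q'"
proof -
  have v: "fst p \<in> PX_V r s" and "fst q = fst p" "fst q' = fst p"
    using assms fst_in_PX_V by (auto simp: sPX_adj_iff)
  then show ?thesis
    using assms mem_sPX_V_pair[OF v] by (metis prod.collapse)
qed

lemma not_on_4cycle_if_cycle_neq:
  assumes p: "p \<in> sPX_V r s" and q: "q \<in> sPX_V r s" and pq: "sPX_adj r s p q"
    and neq: "snd p \<noteq> snd q"
  shows "\<not> on_4cycle r s p q"
proof
  assume "on_4cycle r s p q"
  then obtain u w where u: "u \<in> sPX_V r s" and w: "w \<in> sPX_V r s" and d: "distinct [p, q, u, w]"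
    and qu: "sPX_adj r s q u" and uw: "sPX_adj r s u w" and wp: "sPX_adj r s w p"
    unfolding on_4cycle_def by blast
  have qp: "sPX_adj r s q p" and pw: "sPX_adj r s p w"
    using pq wp sPX_adj_sym by blast+
  have u_q: "snd u = snd q"
    using sPX_adj_cycle_neq_unique[OF q u p qu qp] neq d by auto
  have w_p: "snd w = snd p"
    using sPX_adj_cycle_neq_unique[OF p w q pw pq] neq d by auto
  define v where "v = fst p"
  define m where "m = fst u"
  have v: "v \<in> PX_V r s" and fst_q: "fst q = v"
    using fst_in_PX_V[OF p] pq neq by (auto simp: v_def sPX_adj_iff)
  have "fst w = m" and adj: "PX_adj r s v m"
    using uw qu u_q w_p neq fst_q by (auto simp: sPX_adj_iff m_def)
  then have "m \<in> \<Union>(snd p)" and "m \<in> \<Union>(snd q)"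
    using u w u_q w_p by (auto simp: mem_sPX_V_iff m_def)
  moreover have "snd p = cyc_out r v \<and> snd q = cyc_in r v \<or> snd p = cyc_in r v \<and> snd q = cyc_out r v"
    using mem_sPX_V_pair[OF v] p q fst_q neq by (metis prod.collapse v_def)
  ultimately have "PX_arc r s v m" and "PX_arc r s m v"
    using PX_arc_if_adj_in_cyc_out[OF v _ adj] PX_arc_if_adj_in_cyc_in[OF v _ adj] by auto
  then show False
    using PX_arc_asym by blast
qed

lemma on_4cycle_iff_same_cycle:
  "p \<in> sPX_V r s \<Longrightarrow> q \<in> sPX_V r s \<Longrightarrow> sPX_adj r s p q \<Longrightarrow> on_4cycle r s p q \<longleftrightarrow> snd p = snd q"
  using on_4cycle_if_same_cycle not_on_4cycle_if_cycle_neq by blast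

end

section \<open>Automorphisms of the digraph\<close>

lemma relpowp_map:
  assumes "\<And>u w. R u w \<Longrightarrow> R (f u) (f w)"
  shows "(R ^^ k) u w \<Longrightarrow> (R ^^ k) (f u) (f w)"
proof (induction k arbitrary: w)
  case (Suc k)
  then obtain m where "(R ^^ k) u m" and "R m w"
    by (auto elim: relpowp_Suc_E)
  then show ?case
    using Suc.IH assms by (blast intro: relpowp_Suc_I)
qed simp

lemma relpowp_invariant:
  assumes "\<And>u w. R u w \<Longrightarrow> P u \<longleftrightarrow> P w"
  shows "(R ^^ k) u w \<Longrightarrow> P u \<longleftrightarrow> P w"
proof (induction k arbitrary: w)
  case (Suc k)
  then obtain m where "(R ^^ k) u m" and "R m w"
    by (auto elim: relpowp_Suc_E)
  then show ?case
    using Suc.IH assms by blast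
qed simp

context praeger_xu
begin

lemma PX_arc_relpowp_nth:
  "(PX_arc r s ^^ k) u w \<Longrightarrow> j + k < s \<Longrightarrow> snd w ! j = snd u ! (j + k)"
proof (induction k arbitrary: w j)
  case (Suc k)
  then obtain m where m: "(PX_arc r s ^^ k) u m" and arc: "PX_arc r s m w"
    by (auto elim: relpowp_Suc_E)
  then have tl_m: "tl (snd m) = butlast (snd w)" and len: "length (snd m) = s" "length (snd w) = s"
    by (auto simp: PX_arc_iff PX_V_iff)
  have "snd w ! j = butlast (snd w) ! j"
    using Suc.prems len by (simp add: nth_butlast)
  also have "\<dots> = snd m ! Suc j"
    using Suc.prems len by (simp add: tl_m[symmetric] nth_tl)
  also have "\<dots> = snd u ! (Suc j + k)"
    using Suc.IH[OF m] Suc.prems by simp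
  finally show ?case
    by simp
qed simp

lemma PX_arc_relpowp_append:
  assumes x: "x < r" and e: "length e = s"
  shows "length t \<le> s \<Longrightarrow> (PX_arc r s ^^ length t) (x, e) ((x + length t) mod r, drop (length t) e @ t)"
proof (induction t rule: rev_induct)
  case Nil
  then show ?case
    using x by simp
next
  case (snoc d t)
  define k where "k = length t"
  have k: "k < s"
    using snoc.prems k_def by simp
  have "drop k e \<noteq> []"
    using k e by simp
  then have "PX_arc r s ((x + k) mod r, drop k e @ t) ((x + Suc k) mod r, drop (Suc k) e @ t @ [d])"
    unfolding PX_arc_iff using r_pos e k k_def
    by (auto simp: mod_simps tl_drop drop_Suc butlast_append)
  then show ?case
    using snoc k_def by (auto intro: relpowp_Suc_I)
qed

lemma PX_arc_invariant_const:
  assumes P: "\<And>u w. PX_arc r s u w \<Longrightarrow> P u \<longleftrightarrow> P w" and v: "v \<in> PX_V r s"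
  shows "P v \<longleftrightarrow> P (0, replicate s False)"
proof -
  obtain x e where ve: "v = (x, e)"
    by fastforce
  have x: "x < r" and e: "length e = s"
    using v ve by auto
  have "(PX_arc r s ^^ s) v ((x + s) mod r, replicate s False)"
    using PX_arc_relpowp_append[OF x e, of "replicate s False"] by (simp add: ve e)
  then have "P v \<longleftrightarrow> P ((x + s) mod r, replicate s False)"
    using relpowp_invariant[of "PX_arc r s" P, OF P] by blast
  moreover have "P (z mod r, replicate s False) \<longleftrightarrow> P (0, replicate s False)" for z
  proof (induction z)
    case (Suc z)
    have "butlast (replicate s False) = replicate (s - 1) False"
      by (metis butlast_rev rev_replicate tl_replicate)
    then have "PX_arc r s (z mod r, replicate s False) (Suc z mod r, replicate s False)"
      unfolding PX_arc_iff using r_pos by (auto simp: mod_simps)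
    then show ?case
      using Suc P by blast
  qed simp
  ultimately show ?thesis
    by simp
qed

end

locale px_arc_endo = praeger_xu +
  fixes F :: "pxv \<Rightarrow> pxv"
  assumes F_in_V: "v \<in> PX_V r s \<Longrightarrow> F v \<in> PX_V r s"
    and inj_F: "inj_on F (PX_V r s)"
    and F_arc: "PX_arc r s u w \<Longrightarrow> PX_arc r s (F u) (F w)"
begin

lemma F_relpowp: "(PX_arc r s ^^ k) u w \<Longrightarrow> (PX_arc r s ^^ k) (F u) (F w)"
  using relpowp_map[of "PX_arc r s" F, OF F_arc] .

lemma length_snd_F: "v \<in> PX_V r s \<Longrightarrow> length (snd (F v)) = s"
  using F_in_V by (simp add: PX_V_iff)

lemma fst_F:
  assumes v: "v \<in> PX_V r s"
  shows "fst (F v) = (fst v + fst (F (0, replicate s False))) mod r"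
proof -
  define b where "b = fst (F (0, replicate s False))"
  have "fst (F u) = (fst u + b) mod r \<longleftrightarrow> fst (F w) = (fst w + b) mod r"
    if arc: "PX_arc r s u w" for u w
  proof -
    have succ: "fst w = (fst u + 1) mod r" and succ_F: "fst (F w) = (fst (F u) + 1) mod r"
      using arc F_arc[OF arc] by (simp_all add: PX_arc_iff)
    have Fu: "fst (F u) < r"
      using arc F_in_V by (auto simp: PX_arc_iff PX_V_iff)
    show ?thesis
    proof
      assume "fst (F u) = (fst u + b) mod r"
      then show "fst (F w) = (fst w + b) mod r"
        using succ succ_F by (simp add: mod_simps)
    next
      assume "fst (F w) = (fst w + b) mod r"
      then have "(fst (F u) + 1) mod r = ((fst u + b) mod r + 1) mod r"
        using succ succ_F by (simp add: mod_simps add.commute add.left_commute)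
      then show "fst (F u) = (fst u + b) mod r"
        using mod_add_right_cancel[OF Fu, of "(fst u + b) mod r" 1] r_pos by simp
    qed
  qed
  then have "fst (F v) = (fst v + b) mod r \<longleftrightarrow> fst (F (0, replicate s False)) = (0 + b) mod r"
    using PX_arc_invariant_const[OF _ v, of "\<lambda>v. fst (F v) = (fst v + b) mod r"] by simp
  moreover have "b < r"
    using F_in_V[of "(0, replicate s False)"] r_pos by (simp add: b_def PX_V_iff)
  ultimately show ?thesis
    by (simp add: b_def)
qed

definition bit_image :: "nat \<Rightarrow> bool \<Rightarrow> bool" where
  "bit_image y i = hd (snd (F (y, i # replicate (s - 1) False)))"

lemma hd_snd_F:
  assumes yh: "(y, i # h) \<in> PX_V r s"
  shows "hd (snd (F (y, i # h))) = bit_image y i"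
proof -
  have y: "y < r" and h: "length h = s - 1"
    using yh by auto
  define w where "w = ((y + r * s - (s - 1)) mod r, replicate (s - 1) False @ [i])"
  have w: "w \<in> PX_V r s"
    using r_pos s_pos by (simp add: w_def)
  have "s \<le> r * s"
    using r_pos by simp
  then have "s - 1 \<le> y + r * s"
    by linarith
  then have "y + r * s - (s - 1) + (s - 1) = y + r * s"
    by (rule le_add_diff_inverse2)
  then have "((y + r * s - (s - 1)) mod r + (s - 1)) mod r = (y + r * s) mod r"
    by (metis mod_add_left_eq)
  then have level: "((y + r * s - (s - 1)) mod r + (s - 1)) mod r = y"
    using y by simp
  have walk: "(PX_arc r s ^^ (s - 1)) w (y, i # h')" if "length h' = s - 1" for h'
    using PX_arc_relpowp_append[of "fst w" "snd w" h'] w that level s_pos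
    by (simp add: w_def PX_V_iff)
  have "hd (snd (F (y, i # h'))) = snd (F w) ! (s - 1)" if "length h' = s - 1" for h'
  proof -
    have "(y, i # h') \<in> PX_V r s"
      using y that s_pos by simp
    then have "snd (F (y, i # h')) \<noteq> []"
      using length_snd_F s_pos by fastforce
    then show ?thesis
      using PX_arc_relpowp_nth[OF F_relpowp[OF walk[OF that]], of 0] s_pos by (simp add: hd_conv_nth)
  qed
  then show ?thesis
    unfolding bit_image_def using h by simp
qed

lemma nth_snd_F:
  assumes v: "(x, e) \<in> PX_V r s" and j: "j < s"
  shows "snd (F (x, e)) ! j = bit_image ((x + j) mod r) (e ! j)"
proof -
  have x: "x < r" and e: "length e = s"
    using v by auto
  define u where "u = ((x + j) mod r, drop j e @ replicate j False)"
  have walk: "(PX_arc r s ^^ j) (x, e) u"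
    using PX_arc_relpowp_append[OF x e, of "replicate j False"] j by (simp add: u_def)
  have u_eq: "u = ((x + j) mod r, e ! j # (drop (Suc j) e @ replicate j False))"
    using j e by (simp add: u_def Cons_nth_drop_Suc)
  have u: "u \<in> PX_V r s"
    using u_eq e j r_pos by simp
  have "snd (F (x, e)) ! j = snd (F u) ! 0"
    using PX_arc_relpowp_nth[OF F_relpowp[OF walk], of 0] j by simp
  also have "\<dots> = hd (snd (F u))"
    by (rule hd_conv_nth[symmetric]) (use length_snd_F[OF u] s_pos in auto)
  also have "\<dots> = bit_image ((x + j) mod r) (e ! j)"
    using hd_snd_F u u_eq by simp
  finally show ?thesis .
qed

lemma bit_image_False_neq_True:
  assumes y: "y < r"
  shows "bit_image y False \<noteq> bit_image y True"
proof
  assume eq: "bit_image y False = bit_image y True"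
  define zs where "zs = replicate (s - 1) False"
  have V: "(y, False # zs) \<in> PX_V r s" "(y, True # zs) \<in> PX_V r s"
    using y s_pos by (auto simp: zs_def)
  have "snd (F (y, False # zs)) = snd (F (y, True # zs))"
  proof (rule nth_equalityI)
    show "length (snd (F (y, False # zs))) = length (snd (F (y, True # zs)))"
      using length_snd_F[OF V(1)] length_snd_F[OF V(2)] by simp
    fix j
    assume "j < length (snd (F (y, False # zs)))"
    then have "j < s"
      using length_snd_F[OF V(1)] by simp
    then show "snd (F (y, False # zs)) ! j = snd (F (y, True # zs)) ! j"
      using nth_snd_F[OF V(1)] nth_snd_F[OF V(2)] eq y by (cases j) auto
  qed
  moreover have "fst (F (y, False # zs)) = fst (F (y, True # zs))"
    using fst_F[OF V(1)] fst_F[OF V(2)] by simp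
  ultimately have "F (y, False # zs) = F (y, True # zs)"
    by (simp add: prod_eq_iff)
  then show False
    using inj_onD[OF inj_F _ V] by simp
qed

theorem eq_px_shift: "\<exists>b<r. \<exists>c. \<forall>v\<in>PX_V r s. F v = px_shift r b c v"
proof -
  define b where "b = fst (F (0, replicate s False))"
  define c where "c z = bit_image (z mod r) False" for z
  have bit: "bit_image ((x + j) mod r) i = (i \<noteq> c ((x + j) mod r))" for x j i
    using bit_image_False_neq_True[of "(x + j) mod r"] r_pos unfolding c_def by (cases i) auto
  have "F v = px_shift r b c v" if v: "v \<in> PX_V r s" for v
  proof -
    obtain x e where ve: "v = (x, e)"
      by fastforce
    have "snd (F v) = flip_bits r c x e"
    proof (rule nth_equalityI)
      show "length (snd (F v)) = length (flip_bits r c x e)"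
        using length_snd_F[OF v] v by (simp add: ve)
      fix j
      assume "j < length (snd (F v))"
      then show "snd (F v) ! j = flip_bits r c x e ! j"
        using nth_snd_F[of x e j] length_snd_F[OF v] bit v by (simp add: ve)
    qed
    moreover have "fst (F v) = (x + b) mod r"
      using fst_F[OF v] by (simp add: ve b_def)
    ultimately show ?thesis
      by (simp add: px_shift_def ve prod_eq_iff)
  qed
  moreover have "b < r"
    using F_in_V[of "(0, replicate s False)"] r_pos by (simp add: b_def PX_V_iff)
  ultimately show ?thesis
    by blast
qed

end

section \<open>H acts on sC(r,s) by automorphisms\<close>

definition is_PX_S_aut :: "nat \<Rightarrow> nat \<Rightarrow> (pxv \<Rightarrow> pxv) \<Rightarrow> bool" where
  "is_PX_S_aut r s G \<longleftrightarrow> (\<forall>v\<in>PX_V r s. G v \<in> PX_V r s) \<and> inj_on G (PX_V r s) \<and>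
     (\<forall>u\<in>PX_V r s. \<forall>w\<in>PX_V r s. PX_adj r s (G u) (G w) \<longleftrightarrow> PX_adj r s u w) \<and>
     (\<forall>C\<in>PX_S r s. (\<lambda>e. G ` e) ` C \<in> PX_S r s)"

lemma mem_H_grp_iff: "g \<in> H_grp r \<longleftrightarrow> (\<exists>neg b c. b < r \<and> g = H_map r neg b c)"
  unfolding H_grp_def by blast

context praeger_xu
begin

lemma finite_PX_V: "finite (PX_V r s)"
proof -
  have "PX_V r s \<subseteq> {..<r} \<times> {e. length e = s}"
    by (auto simp: PX_V_def)
  then show ?thesis
    by (rule finite_subset) (simp add: finite_list_length)
qed

lemma finite_PX_S: "finite (PX_S r s)"
proof -
  have "PX_S r s = (\<lambda>(x, h). PX_cyc r x h) ` ({..<r} \<times> {h. length h = s - 1})"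
    by (auto simp: PX_S_def)
  then show ?thesis
    by (simp add: finite_list_length)
qed

lemma finite_sPX_V: "finite (sPX_V r s)"
proof -
  have "sPX_V r s \<subseteq> PX_V r s \<times> PX_S r s"
    using fst_in_PX_V by (auto simp: mem_sPX_V_iff)
  then show ?thesis
    using finite_PX_V finite_PX_S finite_subset by blast
qed

lemma is_PX_S_aut_cong:
  assumes K: "is_PX_S_aut r s K" and eq: "\<And>v. v \<in> PX_V r s \<Longrightarrow> G v = K v"
  shows "is_PX_S_aut r s G"
proof -
  have "(\<lambda>e. G ` e) ` C = (\<lambda>e. K ` e) ` C" if "C \<in> PX_S r s" for C
  proof (rule image_cong[OF refl])
    fix e
    assume "e \<in> C"
    then have "e \<subseteq> PX_V r s"
      using PX_S_verts_subset[OF that] by blast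
    then show "G ` e = K ` e"
      using eq by (auto intro!: image_cong)
  qed
  moreover have "inj_on G (PX_V r s)"
    using K eq inj_on_cong unfolding is_PX_S_aut_def by blast
  ultimately show ?thesis
    using K eq unfolding is_PX_S_aut_def by simp
qed

lemma is_aut_sPX_lift:
  assumes G: "is_PX_S_aut r s G"
  shows "is_aut (sPX_V r s) (sPX_adj r s) (\<lambda>p. (G (fst p), (\<lambda>e. G ` e) ` snd p))"
proof -
  let ?G = "\<lambda>C. (\<lambda>e. G ` e) ` C"
  let ?f = "\<lambda>p. (G (fst p), ?G (snd p))"
  have G_V: "v \<in> PX_V r s \<Longrightarrow> G v \<in> PX_V r s" and inj_G: "inj_on G (PX_V r s)"
    and G_adj: "u \<in> PX_V r s \<Longrightarrow> w \<in> PX_V r s \<Longrightarrow> PX_adj r s (G u) (G w) \<longleftrightarrow> PX_adj r s u w"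
    and G_S: "C \<in> PX_S r s \<Longrightarrow> ?G C \<in> PX_S r s" for u v w C
    using G unfolding is_PX_S_aut_def by blast+
  have verts: "\<Union>(?G C) = G ` \<Union>C" for C
    by (simp add: image_Union)
  have G_S_inj: "?G C = ?G D \<longleftrightarrow> C = D" if C: "C \<in> PX_S r s" and D: "D \<in> PX_S r s" for C D
  proof
    assume "?G C = ?G D"
    then have "G ` \<Union>C = G ` \<Union>D"
      by (metis verts)
    then have "\<Union>C = \<Union>D"
      using inj_on_image_eq_iff[OF inj_G PX_S_verts_subset[OF C] PX_S_verts_subset[OF D]] by blast
    then show "C = D"
      using PX_S_eq_if_verts_subset[OF C D] by simp
  qed simp
  have into: "?f ` sPX_V r s \<subseteq> sPX_V r s"
    using G_S verts by (auto simp: mem_sPX_V_iff)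
  have inj: "inj_on ?f (sPX_V r s)"
  proof
    fix p q
    assume p: "p \<in> sPX_V r s" and q: "q \<in> sPX_V r s" and eq: "?f p = ?f q"
    then have "fst p = fst q"
      using fst_in_PX_V inj_G by (simp add: inj_on_eq_iff)
    moreover have "snd p = snd q"
      using p q eq G_S_inj by (simp add: mem_sPX_V_iff)
    ultimately show "p = q"
      by (simp add: prod_eq_iff)
  qed
  have "bij_betw ?f (sPX_V r s) (sPX_V r s)"
    unfolding bij_betw_def using inj endo_inj_surj[OF finite_sPX_V into inj] by blast
  moreover have "sPX_adj r s p q \<longleftrightarrow> sPX_adj r s (?f p) (?f q)"
    if p: "p \<in> sPX_V r s" and q: "q \<in> sPX_V r s" for p q
  proof -
    have "fst p \<in> PX_V r s" "fst q \<in> PX_V r s" "snd p \<in> PX_S r s" "snd q \<in> PX_S r s"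
      using p q fst_in_PX_V by (auto simp: mem_sPX_V_iff)
    then show ?thesis
      unfolding sPX_adj_iff fst_conv snd_conv using G_S_inj G_adj inj_G by (auto simp: inj_on_eq_iff)
  qed
  ultimately show ?thesis
    unfolding is_aut_def by blast
qed

lemma px_shift_PX_cyc:
  "(\<lambda>e. px_shift r b c ` e) ` PX_cyc r x h = PX_cyc r ((x + b) mod r) (flip_bits r c (Suc x) h)"
proof -
  define x' where "x' = (x + b) mod r"
  define h' where "h' = flip_bits r c (Suc x) h"
  define k where "k = (Suc x + length h) mod r"
  have src: "px_shift r b c (cyc_src x h i) = cyc_src x' h' (i \<noteq> c (x mod r))" for i
    by (simp add: px_shift_def cyc_src_def x'_def h'_def)
  have "((x + 1) mod r + b) mod r = (x' + 1) mod r"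
    by (simp add: x'_def mod_simps add.commute add.left_commute)
  moreover have "flip_bits r c ((x + 1) mod r) (h @ [j]) = h' @ [j \<noteq> c k]" for j
    by (simp add: flip_bits_mod flip_bits_snoc h'_def k_def mod_simps)
  ultimately have tgt: "px_shift r b c (cyc_tgt r x h j) = cyc_tgt r x' h' (j \<noteq> c k)" for j
    by (simp add: px_shift_def cyc_tgt_def)
  show ?thesis
    unfolding PX_cyc_eq image_insert image_empty src tgt x'_def[symmetric] h'_def[symmetric]
    by (cases "c (x mod r)"; cases "c k") (auto simp: insert_commute)
qed

lemma px_reflect_PX_cyc:
  assumes h: "length h = s - 1"
  shows "(\<lambda>e. px_reflect r b c ` e) ` PX_cyc r x h
    = PX_cyc r ((r - ((x + 1) mod r + s - 1) mod r + b) mod r) (rev (flip_bits r c (Suc x) h))"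
proof -
  define x' where "x' = (r - ((x + 1) mod r + s - 1) mod r + b) mod r"
  define h' where "h' = rev (flip_bits r c (Suc x) h)"
  define k where "k = (Suc x + length h) mod r"
  have len: "length (i # h) = s" "length (h @ [i]) = s" for i
    using h s_pos by auto
  have "(r - (x + s - 1) mod r + b) mod r = (x' + 1) mod r"
  proof -
    have "(r - (x + s - 1) mod r + b) mod r = (x' + 1) mod r \<longleftrightarrow>
      int r dvd ((int b - int (x + s - 1)) - (int b - int ((x + 1) mod r + s - 1) + 1))"
      unfolding x'_def using r_pos by (intro level_eq_iff_dvd int_reflect_mod int_Suc_mod) simp_all
    moreover have "(int b - int (x + s - 1)) - (int b - int ((x + 1) mod r + s - 1) + 1)
        = int ((x + 1) mod r) - (int x + 1)"
      using s_pos by (simp add: of_nat_diff)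
    moreover have "int r dvd (int ((x + 1) mod r) - (int x + 1))"
      by (simp add: zmod_int mod_eq_dvd_iff[symmetric] mod_simps add.commute)
    ultimately show ?thesis
      by metis
  qed
  then have src: "px_reflect r b c (cyc_src x h i) = cyc_tgt r x' h' (i \<noteq> c (x mod r))" for i
    using len by (simp add: px_reflect_def cyc_src_def cyc_tgt_def h'_def)
  have "rev (flip_bits r c ((x + 1) mod r) (h @ [j])) = (j \<noteq> c k) # h'" for j
    by (simp add: flip_bits_mod flip_bits_snoc h'_def k_def mod_simps)
  then have tgt: "px_reflect r b c (cyc_tgt r x h j) = cyc_src x' h' (j \<noteq> c k)" for j
    using len by (simp add: px_reflect_def cyc_tgt_def cyc_src_def x'_def)
  show ?thesis
    unfolding PX_cyc_eq image_insert image_empty src tgt x'_def[symmetric] h'_def[symmetric]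
    by (cases "c (x mod r)"; cases "c k") (auto simp: insert_commute)
qed

lemma is_PX_S_aut_px_shift: "is_PX_S_aut r s (px_shift r b c)"
proof -
  have "(\<lambda>e. px_shift r b c ` e) ` C \<in> PX_S r s" if C: "C \<in> PX_S r s" for C
  proof -
    obtain x h where "length h = s - 1" and "C = PX_cyc r x h"
      using C by (auto simp: mem_PX_S_iff)
    then have "(\<lambda>e. px_shift r b c ` e) ` C = PX_cyc r ((x + b) mod r) (flip_bits r c (Suc x) h)"
      and "length (flip_bits r c (Suc x) h) = s - 1" and "(x + b) mod r < r"
      using r_pos by (simp_all add: px_shift_PX_cyc)
    then show ?thesis
      unfolding mem_PX_S_iff by blast
  qed
  then show ?thesis
    unfolding is_PX_S_aut_def using px_shift_in_V inj_on_px_shift px_shift_adj_iff by blast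
qed

lemma is_PX_S_aut_px_reflect: "is_PX_S_aut r s (px_reflect r b c)"
proof -
  have "(\<lambda>e. px_reflect r b c ` e) ` C \<in> PX_S r s" if C: "C \<in> PX_S r s" for C
  proof -
    obtain x h where "length h = s - 1" and "C = PX_cyc r x h"
      using C by (auto simp: mem_PX_S_iff)
    then have "(\<lambda>e. px_reflect r b c ` e) ` C
        = PX_cyc r ((r - ((x + 1) mod r + s - 1) mod r + b) mod r) (rev (flip_bits r c (Suc x) h))"
      and "length (rev (flip_bits r c (Suc x) h)) = s - 1"
      and "(r - ((x + 1) mod r + s - 1) mod r + b) mod r < r"
      using r_pos by (simp_all add: px_reflect_PX_cyc)
    then show ?thesis
      unfolding mem_PX_S_iff by blast
  qed
  then show ?thesis
    unfolding is_PX_S_aut_def using px_reflect_in_V inj_on_px_reflect px_reflect_adj_iff by blast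
qed

lemma act_V_H_map_False:
  assumes "v \<in> PX_V r s"
  shows "act_V r (H_map r False b c) v = px_shift r b c v"
proof -
  obtain x e where v: "v = (x, e)"
    by fastforce
  then have "e \<noteq> []"
    using assms s_pos by auto
  then show ?thesis
    using act_V_shift[OF r_pos] by (simp add: v)
qed

lemma act_V_H_map_True:
  assumes "v \<in> PX_V r s"
  shows "act_V r (H_map r True b c) v = px_reflect r b c v"
proof -
  obtain x e where v: "v = (x, e)"
    by fastforce
  then have "e \<noteq> []"
    using assms s_pos by auto
  then show ?thesis
    using act_V_reflect[OF r_ge_3] by (simp add: v)
qed

lemma is_PX_S_aut_act_V: "g \<in> H_grp r \<Longrightarrow> is_PX_S_aut r s (act_V r g)"
  unfolding mem_H_grp_iff
  using is_PX_S_aut_cong[OF is_PX_S_aut_px_shift act_V_H_map_False]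
    is_PX_S_aut_cong[OF is_PX_S_aut_px_reflect act_V_H_map_True]
  by (metis (full_types))

theorem is_aut_act_sV: "g \<in> H_grp r \<Longrightarrow> is_aut (sPX_V r s) (sPX_adj r s) (act_sV r g)"
  using is_aut_sPX_lift[OF is_PX_S_aut_act_V] by (simp add: act_sV_def[abs_def])

end

section \<open>Every automorphism of sC(r,s) comes from H\<close>

locale sPX_aut = praeger_xu +
  fixes f :: "pxv \<times> pxv set set \<Rightarrow> pxv \<times> pxv set set"
  assumes aut: "is_aut (sPX_V r s) (sPX_adj r s) f"
begin

lemma bij_f: "bij_betw f (sPX_V r s) (sPX_V r s)"
  using aut unfolding is_aut_def by (rule conjunct1)

lemma f_in_sPX_V: "p \<in> sPX_V r s \<Longrightarrow> f p \<in> sPX_V r s"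
  by (rule bij_betw_apply[OF bij_f])

lemma inj_on_f: "inj_on f (sPX_V r s)"
  by (rule bij_betw_imp_inj_on[OF bij_f])

lemma f_image: "f ` sPX_V r s = sPX_V r s"
  by (rule bij_betw_imp_surj_on[OF bij_f])

lemma f_adj_iff:
  assumes "p \<in> sPX_V r s" and "q \<in> sPX_V r s"
  shows "sPX_adj r s (f p) (f q) \<longleftrightarrow> sPX_adj r s p q"
proof -
  have "\<forall>u\<in>sPX_V r s. \<forall>v\<in>sPX_V r s. sPX_adj r s u v \<longleftrightarrow> sPX_adj r s (f u) (f v)"
    using aut unfolding is_aut_def by (rule conjunct2)
  with assms show ?thesis
    by blast
qed

lemma on_4cycle_f_iff:
  assumes p: "p \<in> sPX_V r s" and q: "q \<in> sPX_V r s"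
  shows "on_4cycle r s (f p) (f q) \<longleftrightarrow> on_4cycle r s p q"
proof
  assume "on_4cycle r s (f p) (f q)"
  then obtain u' w' where "u' \<in> f ` sPX_V r s" and "w' \<in> f ` sPX_V r s"
    and d: "distinct [f p, f q, u', w']"
    and adj: "sPX_adj r s (f q) u'" "sPX_adj r s u' w'" "sPX_adj r s w' (f p)"
    unfolding on_4cycle_def f_image by blast
  then obtain u w where u: "u \<in> sPX_V r s" "u' = f u" and w: "w \<in> sPX_V r s" "w' = f w"
    by blast
  have "distinct [p, q, u, w]"
    using d u w by auto
  moreover have "sPX_adj r s q u" "sPX_adj r s u w" "sPX_adj r s w p"
    using adj f_adj_iff p q u w by blast+
  ultimately show "on_4cycle r s p q"
    unfolding on_4cycle_def using u w by blast
next
  assume "on_4cycle r s p q"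
  then obtain u w where u: "u \<in> sPX_V r s" and w: "w \<in> sPX_V r s" and d: "distinct [p, q, u, w]"
    and adj: "sPX_adj r s q u" "sPX_adj r s u w" "sPX_adj r s w p"
    unfolding on_4cycle_def by blast
  have "distinct [f p, f q, f u, f w]"
    using d p q u w inj_on_f by (auto dest: inj_onD)
  moreover have "sPX_adj r s (f q) (f u)" "sPX_adj r s (f u) (f w)" "sPX_adj r s (f w) (f p)"
    using adj f_adj_iff p q u w by blast+
  ultimately show "on_4cycle r s (f p) (f q)"
    unfolding on_4cycle_def using f_in_sPX_V u w by blast
qed

lemma snd_f_eq_iff:
  assumes p: "p \<in> sPX_V r s" and q: "q \<in> sPX_V r s" and pq: "sPX_adj r s p q"
  shows "snd (f p) = snd (f q) \<longleftrightarrow> snd p = snd q"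
proof -
  have "sPX_adj r s (f p) (f q)"
    using f_adj_iff p q pq by blast
  then have "snd (f p) = snd (f q) \<longleftrightarrow> on_4cycle r s (f p) (f q)"
    using on_4cycle_iff_same_cycle[OF f_in_sPX_V[OF p] f_in_sPX_V[OF q]] by simp
  also have "\<dots> \<longleftrightarrow> snd p = snd q"
    using on_4cycle_f_iff[OF p q] on_4cycle_iff_same_cycle[OF p q pq] by simp
  finally show ?thesis .
qed

lemma cyc_out_in_sPX_V: "v \<in> PX_V r s \<Longrightarrow> (v, cyc_out r v) \<in> sPX_V r s"
  using mem_sPX_V_pair by blast

lemma cyc_in_in_sPX_V: "v \<in> PX_V r s \<Longrightarrow> (v, cyc_in r v) \<in> sPX_V r s"
  using mem_sPX_V_pair by blast

lemma sPX_adj_cyc_out_cyc_in: "v \<in> PX_V r s \<Longrightarrow> sPX_adj r s (v, cyc_out r v) (v, cyc_in r v)"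
  using cyc_out_neq_cyc_in by (simp add: sPX_adj_iff)

lemma snd_f_cyc_out_neq_cyc_in: "v \<in> PX_V r s \<Longrightarrow> snd (f (v, cyc_out r v)) \<noteq> snd (f (v, cyc_in r v))"
  using snd_f_eq_iff[OF cyc_out_in_sPX_V cyc_in_in_sPX_V sPX_adj_cyc_out_cyc_in] cyc_out_neq_cyc_in
  by simp

text \<open>The two vertices \<open>(v, C)\<close> of sC(r,s) over \<open>v\<close> are joined by the only edge through them that
  lies on no 4-cycle, so \<open>f\<close> maps them to the two vertices over a common vertex
  \<open>induced v\<close>.\<close>

definition induced :: "pxv \<Rightarrow> pxv" where
  "induced v = fst (f (v, cyc_out r v))"

lemma fst_f:
  assumes v: "v \<in> PX_V r s" and vC: "(v, C) \<in> sPX_V r s"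
  shows "fst (f (v, C)) = induced v"
proof -
  have "C = cyc_out r v \<or> C = cyc_in r v"
    using mem_sPX_V_pair[OF v] vC by blast
  moreover have "sPX_adj r s (f (v, cyc_out r v)) (f (v, cyc_in r v))"
    using f_adj_iff cyc_out_in_sPX_V[OF v] cyc_in_in_sPX_V[OF v] sPX_adj_cyc_out_cyc_in[OF v] by blast
  then have "fst (f (v, cyc_out r v)) = fst (f (v, cyc_in r v))"
    using snd_f_cyc_out_neq_cyc_in[OF v] by (simp add: sPX_adj_iff)
  ultimately show ?thesis
    by (auto simp: induced_def)
qed

lemma induced_in_V: "v \<in> PX_V r s \<Longrightarrow> induced v \<in> PX_V r s"
  unfolding induced_def using f_in_sPX_V[OF cyc_out_in_sPX_V] fst_in_PX_V by blast

lemma f_pair_cases: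
  assumes v: "v \<in> PX_V r s" and vC: "(v, C) \<in> sPX_V r s"
  shows "f (v, C) = (induced v, cyc_out r (induced v)) \<or> f (v, C) = (induced v, cyc_in r (induced v))"
proof -
  have "(induced v, snd (f (v, C))) \<in> sPX_V r s"
    using f_in_sPX_V[OF vC] fst_f[OF v vC] by (metis prod.collapse)
  then have "snd (f (v, C)) = cyc_out r (induced v) \<or> snd (f (v, C)) = cyc_in r (induced v)"
    using mem_sPX_V_pair[OF induced_in_V[OF v]] by blast
  then show ?thesis
    using fst_f[OF v vC] by (metis prod.collapse)
qed

lemma inj_on_induced: "inj_on induced (PX_V r s)"
proof
  fix u v
  assume u: "u \<in> PX_V r s" and v: "v \<in> PX_V r s" and eq: "induced u = induced v"
  show "u = v"
  proof (rule ccontr)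
    assume "u \<noteq> v"
    define ps where "ps = [(u, cyc_out r u), (u, cyc_in r u), (v, cyc_out r v), (v, cyc_in r v)]"
    let ?Q = "{(induced v, cyc_out r (induced v)), (induced v, cyc_in r (induced v))}"
    have "set ps \<subseteq> sPX_V r s"
      using u v cyc_out_in_sPX_V cyc_in_in_sPX_V by (simp add: ps_def)
    moreover have "distinct ps"
      using \<open>u \<noteq> v\<close> cyc_out_neq_cyc_in[OF u] cyc_out_neq_cyc_in[OF v] by (simp add: ps_def)
    ultimately have "distinct (map f ps)"
      using inj_on_subset[OF inj_on_f] by (simp add: distinct_map)
    moreover have "set (map f ps) \<subseteq> ?Q"
      using f_pair_cases[OF u cyc_out_in_sPX_V[OF u]] f_pair_cases[OF u cyc_in_in_sPX_V[OF u]]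
        f_pair_cases[OF v cyc_out_in_sPX_V[OF v]] f_pair_cases[OF v cyc_in_in_sPX_V[OF v]] eq
      by (auto simp: ps_def)
    ultimately have "length (map f ps) \<le> card ?Q"
      by (metis card_mono distinct_card finite.emptyI finite.insertI)
    also have "\<dots> \<le> 2"
      by (simp add: card_insert_if)
    finally show False
      by (simp add: ps_def)
  qed
qed

lemma PX_cyc_edge_image:
  assumes C: "C \<in> PX_S r s" and u: "u \<in> \<Union>C" and w: "w \<in> \<Union>C" and uw: "PX_adj r s u w"
  shows "snd (f (u, C)) = snd (f (w, C))" and "PX_adj r s (induced u) (induced w)"
proof -
  have p: "(u, C) \<in> sPX_V r s" and q: "(w, C) \<in> sPX_V r s"
    using C u w by (auto simp: mem_sPX_V_iff)
  have adj: "sPX_adj r s (u, C) (w, C)"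
    using uw by (simp add: sPX_adj_iff)
  show same: "snd (f (u, C)) = snd (f (w, C))"
    using snd_f_eq_iff[OF p q adj] by simp
  have "sPX_adj r s (f (u, C)) (f (w, C))"
    using f_adj_iff p q adj by blast
  moreover have "fst (f (u, C)) = induced u" and "fst (f (w, C)) = induced w"
    using fst_f p q fst_in_PX_V by fastforce+
  ultimately show "PX_adj r s (induced u) (induced w)"
    using same by (simp add: sPX_adj_iff)
qed

lemma snd_f_const_on_cycle:
  assumes C: "C \<in> PX_S r s" and u: "u \<in> \<Union>C" and w: "w \<in> \<Union>C"
  shows "snd (f (u, C)) = snd (f (w, C))"
proof -
  obtain x h where x: "x < r" and h: "length h = s - 1" and C_eq: "C = PX_cyc r x h"
    using C by (auto simp: mem_PX_S_iff)
  have "PX_adj r s (cyc_src x h i) (cyc_tgt r x h j)" for i j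
    using PX_cyc_arc[OF x h] by (simp add: PX_adj_def)
  moreover have "cyc_src x h i \<in> \<Union>C" "cyc_tgt r x h j \<in> \<Union>C" for i j
    unfolding C_eq PX_cyc_verts by (auto simp: cyc_src_def cyc_tgt_def)
  ultimately have "snd (f (cyc_src x h i, C)) = snd (f (cyc_tgt r x h j, C))" for i j
    using PX_cyc_edge_image(1)[OF C] by blast
  then have "snd (f (z, C)) = snd (f (cyc_src x h False, C))" if "z \<in> \<Union>C" for z
  proof -
    from that consider i where "z = cyc_src x h i" | j where "z = cyc_tgt r x h j"
      unfolding C_eq PX_cyc_verts by blast
    then show ?thesis
      by cases (metis \<open>\<And>i j. snd (f (cyc_src x h i, C)) = snd (f (cyc_tgt r x h j, C))\<close>)+
  qed
  then show ?thesis
    using u w by simp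
qed

definition keeps_orientation :: "pxv \<Rightarrow> bool" where
  "keeps_orientation v \<longleftrightarrow> snd (f (v, cyc_out r v)) = cyc_out r (induced v)"

lemma PX_arc_f_cycle:
  assumes arc: "PX_arc r s u w"
  defines "D \<equiv> snd (f (u, cyc_out r u))"
  shows "snd (f (w, cyc_in r w)) = D" and "induced w \<in> \<Union>D"
    and "PX_adj r s (induced u) (induced w)"
proof -
  have u: "u \<in> PX_V r s" and w: "w \<in> PX_V r s"
    using arc by (auto simp: PX_arc_iff)
  define C where "C = cyc_out r u"
  have C_in: "C = cyc_in r w"
    using PX_arc_cyc_out_eq_cyc_in[OF arc] by (simp add: C_def)
  have C: "C \<in> PX_S r s" and uC: "u \<in> \<Union>C"
    using cyc_out_in_PX_S[OF u] mem_cyc_out[OF u] by (simp_all add: C_def)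
  have wC: "w \<in> \<Union>C"
    using mem_cyc_in[OF w] by (simp add: C_in)
  have wC_S: "(w, C) \<in> sPX_V r s"
    using C wC by (simp add: mem_sPX_V_iff)
  have same: "snd (f (u, C)) = snd (f (w, C))" and "PX_adj r s (induced u) (induced w)"
    using PX_cyc_edge_image[OF C uC wC] arc by (simp_all add: PX_adj_def)
  then show "PX_adj r s (induced u) (induced w)"
    by blast
  show D_w: "snd (f (w, cyc_in r w)) = D"
    using same unfolding D_def C_def[symmetric] C_in[symmetric] by simp
  have "f (w, C) \<in> sPX_V r s"
    using f_in_sPX_V[OF wC_S] .
  then show "induced w \<in> \<Union>D"
    using fst_f[OF w wC_S] D_w by (simp add: mem_sPX_V_iff C_in)
qed

lemma PX_arc_induced:
  assumes arc: "PX_arc r s u w"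
  shows "if keeps_orientation u then PX_arc r s (induced u) (induced w) \<and> keeps_orientation w
    else PX_arc r s (induced w) (induced u) \<and> \<not> keeps_orientation w"
proof -
  have u: "u \<in> PX_V r s" and w: "w \<in> PX_V r s"
    using arc by (auto simp: PX_arc_iff)
  define D where "D = snd (f (u, cyc_out r u))"
  have D_w: "snd (f (w, cyc_in r w)) = D" and wD: "induced w \<in> \<Union>D"
    and adj: "PX_adj r s (induced u) (induced w)"
    using PX_arc_f_cycle[OF arc] by (simp_all add: D_def)
  have w_neq: "snd (f (w, cyc_out r w)) \<noteq> D"
    using snd_f_cyc_out_neq_cyc_in[OF w] D_w by simp
  have Fu: "induced u \<in> PX_V r s"
    using induced_in_V[OF u] .
  show ?thesis
  proof (cases "keeps_orientation u")
    case True
    then have D: "D = cyc_out r (induced u)"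
      by (simp add: keeps_orientation_def D_def)
    then have arc': "PX_arc r s (induced u) (induced w)"
      using PX_arc_if_adj_in_cyc_out[OF Fu] wD adj by simp
    then have "D = cyc_in r (induced w)"
      using PX_arc_cyc_out_eq_cyc_in[OF arc'] D by simp
    then have "keeps_orientation w"
      using f_pair_cases[OF w cyc_out_in_sPX_V[OF w]] w_neq by (auto simp: keeps_orientation_def)
    then show ?thesis
      using True arc' by simp
  next
    case False
    then have D: "D = cyc_in r (induced u)"
      using f_pair_cases[OF u cyc_out_in_sPX_V[OF u]] by (auto simp: keeps_orientation_def D_def)
    then have arc': "PX_arc r s (induced w) (induced u)"
      using PX_arc_if_adj_in_cyc_in[OF Fu] wD adj by simp
    then have "D = cyc_out r (induced w)"
      using PX_arc_cyc_out_eq_cyc_in[OF arc'] D by simp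
    then have "\<not> keeps_orientation w"
      using w_neq by (simp add: keeps_orientation_def)
    then show ?thesis
      using False arc' by simp
  qed
qed

lemma keeps_orientation_const:
  assumes "v \<in> PX_V r s"
  shows "keeps_orientation v \<longleftrightarrow> keeps_orientation (0, replicate s False)"
proof -
  have "keeps_orientation u \<longleftrightarrow> keeps_orientation w" if "PX_arc r s u w" for u w
    using PX_arc_induced[OF that] by (auto split: if_splits)
  then show ?thesis
    using PX_arc_invariant_const[OF _ assms] by blast
qed

lemma eq_act_sV_if_induced_eq:
  assumes g: "g \<in> H_grp r" and induced_eq: "\<And>v. v \<in> PX_V r s \<Longrightarrow> induced v = act_V r g v"
  shows "\<forall>p\<in>sPX_V r s. f p = act_sV r g p"
proof
  fix p
  assume p: "p \<in> sPX_V r s"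
  obtain v C where p_eq: "p = (v, C)"
    by fastforce
  have v: "v \<in> PX_V r s" and C: "C \<in> PX_S r s" and vC: "v \<in> \<Union>C"
    using fst_in_PX_V[OF p] p by (auto simp: p_eq mem_sPX_V_iff)
  define D where "D = snd (f (v, C))"
  have D: "D \<in> PX_S r s"
    using f_in_sPX_V[OF p] by (simp add: p_eq D_def mem_sPX_V_iff)
  have gC: "(\<lambda>e. act_V r g ` e) ` C \<in> PX_S r s"
    using is_PX_S_aut_act_V[OF g] C unfolding is_PX_S_aut_def by blast
  have "\<Union>((\<lambda>e. act_V r g ` e) ` C) \<subseteq> \<Union>D"
  proof
    fix y
    assume "y \<in> \<Union>((\<lambda>e. act_V r g ` e) ` C)"
    then obtain u where uC: "u \<in> \<Union>C" and y: "y = act_V r g u"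
      by blast
    have u: "u \<in> PX_V r s" and uS: "(u, C) \<in> sPX_V r s"
      using PX_S_verts_subset[OF C] uC C by (auto simp: mem_sPX_V_iff)
    have "snd (f (u, C)) = D"
      using snd_f_const_on_cycle[OF C uC vC] by (simp add: D_def)
    moreover have "fst (f (u, C)) = act_V r g u"
      using fst_f[OF u uS] induced_eq[OF u] by simp
    moreover have "fst (f (u, C)) \<in> \<Union>(snd (f (u, C)))"
      using f_in_sPX_V[OF uS] by (simp add: mem_sPX_V_iff)
    ultimately show "y \<in> \<Union>D"
      using y by simp
  qed
  then have "(\<lambda>e. act_V r g ` e) ` C = D"
    using PX_S_eq_if_verts_subset[OF gC D] by blast
  moreover have "fst (f (v, C)) = act_V r g v"
    using fst_f[OF v] p induced_eq[OF v] by (simp add: p_eq)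
  ultimately show "f p = act_sV r g p"
    by (simp add: p_eq act_sV_def prod_eq_iff D_def)
qed

lemma eq_act_sV_if_keeps_orientation:
  assumes keeps: "keeps_orientation (0, replicate s False)"
  shows "\<exists>g\<in>H_grp r. \<forall>p\<in>sPX_V r s. f p = act_sV r g p"
proof -
  interpret px_arc_endo r s induced
  proof unfold_locales
    show "PX_arc r s (induced u) (induced w)" if arc: "PX_arc r s u w" for u w
      using PX_arc_induced[OF arc] keeps_orientation_const keeps arc by (auto simp: PX_arc_iff)
  qed (use induced_in_V inj_on_induced in auto)
  obtain b c where b: "b < r" and shift: "\<forall>v\<in>PX_V r s. induced v = px_shift r b c v"
    using eq_px_shift by blast
  have "H_map r False b c \<in> H_grp r"
    using b unfolding mem_H_grp_iff by blast
  moreover have "induced v = act_V r (H_map r False b c) v" if "v \<in> PX_V r s" for v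
    using shift that act_V_H_map_False by simp
  ultimately show ?thesis
    using eq_act_sV_if_induced_eq by blast
qed

lemma eq_act_sV_if_reverses_orientation:
  assumes reverses: "\<not> keeps_orientation (0, replicate s False)"
  shows "\<exists>g\<in>H_grp r. \<forall>p\<in>sPX_V r s. f p = act_sV r g p"
proof -
  let ?R = "px_reflect r 0 (\<lambda>_. False)"
  interpret px_arc_endo r s "\<lambda>v. ?R (induced v)"
  proof unfold_locales
    show "?R (induced v) \<in> PX_V r s" if "v \<in> PX_V r s" for v
      using px_reflect_in_V induced_in_V that by blast
    show "inj_on (\<lambda>v. ?R (induced v)) (PX_V r s)"
    proof (rule comp_inj_on[OF inj_on_induced, unfolded comp_def])
      show "inj_on ?R (induced ` PX_V r s)"
        using inj_on_subset[OF inj_on_px_reflect] induced_in_V by blast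
    qed
    show "PX_arc r s (?R (induced u)) (?R (induced w))" if arc: "PX_arc r s u w" for u w
    proof -
      have u: "u \<in> PX_V r s" and w: "w \<in> PX_V r s"
        using arc by (auto simp: PX_arc_iff)
      have "PX_arc r s (induced w) (induced u)"
        using PX_arc_induced[OF arc] keeps_orientation_const[OF u] reverses by auto
      then show ?thesis
        using px_reflect_arc_iff[OF induced_in_V[OF w] induced_in_V[OF u]] by blast
    qed
  qed
  obtain b c where b: "b < r" and shift: "\<forall>v\<in>PX_V r s. ?R (induced v) = px_shift r b c v"
    using eq_px_shift by blast
  have "(r - b) mod r < r"
    using r_pos by simp
  then have "H_map r True ((r - b) mod r) c \<in> H_grp r"
    unfolding mem_H_grp_iff by blast
  moreover have "induced v = act_V r (H_map r True ((r - b) mod r) c) v" if v: "v \<in> PX_V r s" for v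
  proof -
    have "induced v = ?R (?R (induced v))"
      using px_reflect_0_involutive[OF induced_in_V[OF v]] by simp
    also have "\<dots> = ?R (px_shift r b c v)"
      using shift v by simp
    also have "\<dots> = act_V r (H_map r True ((r - b) mod r) c) v"
      using px_reflect_0_px_shift[OF v b] act_V_H_map_True[OF v] by simp
    finally show ?thesis .
  qed
  ultimately show ?thesis
    using eq_act_sV_if_induced_eq by blast
qed

theorem eq_act_sV: "\<exists>g\<in>H_grp r. \<forall>p\<in>sPX_V r s. f p = act_sV r g p"
  using eq_act_sV_if_keeps_orientation eq_act_sV_if_reverses_orientation by blast

end

section \<open>H acts faithfully and transitively\<close>

lemma H_map_cong:
  assumes "0 < r" and "\<forall>z<r. c z = c' z"
  shows "H_map r neg b c = H_map r neg b c'"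
proof (rule ext, clarify)
  fix x i
  have "c (x mod r) = c' (x mod r)"
    using assms by simp
  then show "H_map r neg b c (x, i) = H_map r neg b c' (x, i)"
    by (simp add: H_map_def)
qed

lemma flip_bits_surj:
  assumes x: "x < r" and len: "length e' = length e" "length e \<le> r"
  shows "\<exists>c. flip_bits r c x e = e'"
proof -
  have level: "((x + j) mod r + r - x) mod r = j" if "j < length e" for j
  proof -
    have j: "j < r"
      using that len by simp
    have "((x + j) mod r + r - x) mod r = j
        \<longleftrightarrow> int r dvd ((int ((x + j) mod r) + int r - int x) - int j)"
      by (rule level_eq_iff_dvd[OF _ int_eq_mod_if_less[OF j]]) (use x in \<open>simp add: zmod_int of_nat_diff\<close>)
    moreover have "int r dvd (int ((x + j) mod r) - (int x + int j))"
      by (rule dvd_diff_of_eq_mod) (simp add: zmod_int)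
    moreover have "(int ((x + j) mod r) + int r - int x) - int j = (int ((x + j) mod r) - (int x + int j)) + int r"
      by simp
    ultimately show ?thesis
      by (metis dvd_add dvd_refl)
  qed
  define c where "c z = (let j = (z + r - x) mod r in if j < length e then e ! j \<noteq> e' ! j else False)" for z
  have "flip_bits r c x e = e'"
  proof (rule nth_equalityI)
    fix j
    assume "j < length (flip_bits r c x e)"
    then show "flip_bits r c x e ! j = e' ! j"
      using level[of j] by (simp add: c_def Let_def, cases "e ! j", auto)
  qed (use len in simp)
  then show ?thesis
    by blast
qed

context praeger_xu
begin

lemma px_shift_inject:
  assumes eq: "\<forall>v\<in>PX_V r s. px_shift r b c v = px_shift r b' c' v" and b: "b < r" and b': "b' < r"
  shows "b = b' \<and> (\<forall>z<r. c z = c' z)"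
proof -
  have "(0, replicate s False) \<in> PX_V r s"
    using r_pos by simp
  then have "px_shift r b c (0, replicate s False) = px_shift r b' c' (0, replicate s False)"
    using eq by blast
  then have "b = b'"
    using b b' by (simp add: px_shift_def)
  moreover have "c z = c' z" if z: "z < r" for z
  proof -
    have "(z, replicate s False) \<in> PX_V r s"
      using z by simp
    then have "px_shift r b c (z, replicate s False) = px_shift r b' c' (z, replicate s False)"
      using eq by blast
    then have "flip_bits r c z (replicate s False) ! 0 = flip_bits r c' z (replicate s False) ! 0"
      by (simp add: px_shift_def)
    then show ?thesis
      using z s_pos by simp
  qed
  ultimately show ?thesis
    by blast
qed

lemma px_reflect_inject:
  assumes eq: "\<forall>v\<in>PX_V r s. px_reflect r b c v = px_reflect r b' c' v" and b: "b < r" and b': "b' < r"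
  shows "b = b' \<and> (\<forall>z<r. c z = c' z)"
proof -
  have "(0, replicate s False) \<in> PX_V r s"
    using r_pos by simp
  then have "px_reflect r b c (0, replicate s False) = px_reflect r b' c' (0, replicate s False)"
    using eq by blast
  then have "(r - (0 + length (replicate s False) - 1) mod r + b) mod r
      = (r - (0 + length (replicate s False) - 1) mod r + b') mod r"
    by (simp only: px_reflect_def fst_conv snd_conv prod.inject)
  then have "int r dvd ((int b - int 0 - int s + 1) - (int b' - int 0 - int s + 1))"
    using level_eq_iff_dvd[OF int_reflect_level[of "replicate s False" 0 b]
        int_reflect_level[of "replicate s False" 0 b']]
    by simp
  then have "b = b'"
    using level_eq_iff_dvd[OF int_eq_mod_if_less[OF b] int_eq_mod_if_less[OF b']] by simp
  moreover have "c z = c' z" if z: "z < r" for z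
  proof -
    have "(z, replicate s False) \<in> PX_V r s"
      using z by simp
    then have "px_reflect r b c (z, replicate s False) = px_reflect r b' c' (z, replicate s False)"
      using eq by blast
    then have "rev (flip_bits r c z (replicate s False)) = rev (flip_bits r c' z (replicate s False))"
      by (simp add: px_reflect_def)
    then have "flip_bits r c z (replicate s False) ! 0 = flip_bits r c' z (replicate s False) ! 0"
      by simp
    then show ?thesis
      using z s_pos by simp
  qed
  ultimately show ?thesis
    by blast
qed

text \<open>Along the arc from \<open>(0; 0\<dots>0)\<close> to \<open>(1; 0\<dots>0)\<close> a translation raises the level by one and a
  reflection lowers it by one; as \<open>r \<ge> 3\<close> these differ.\<close>

lemma px_shift_neq_px_reflect: "\<exists>v\<in>PX_V r s. px_shift r b c v \<noteq> px_reflect r b' c' v"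
proof (rule ccontr)
  assume "\<not> ?thesis"
  then have eq: "fst (px_shift r b c (x, replicate s False)) = fst (px_reflect r b' c' (x, replicate s False))"
    if "x < r" for x
    using that by simp
  have "int r dvd ((int x + int b) - (int b' - int x - int s + 1))" if "x < r" for x
    using eq[OF that] level_eq_iff_dvd[OF int_add_mod int_reflect_level[of "replicate s False"]]
    by (simp add: px_shift_def px_reflect_def)
  from this[of 1] this[of 0] have "int r dvd 2"
    using r_ge_3 dvd_diff by fastforce
  then show False
    using int_dvd_2_imp_le r_ge_3 by fastforce
qed

lemma H_map_inject_on_V:
  assumes b: "b < r" and b': "b' < r"
    and eq: "\<forall>v\<in>PX_V r s. act_V r (H_map r neg b c) v = act_V r (H_map r neg' b' c') v"
  shows "H_map r neg b c = H_map r neg' b' c'"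
proof -
  have "neg = neg' \<and> b = b' \<and> (\<forall>z<r. c z = c' z)"
  proof (cases neg; cases neg')
    assume "neg" "neg'"
    then show ?thesis
      using px_reflect_inject[OF _ b b', of c c'] eq act_V_H_map_True by simp
  next
    assume "\<not> neg" "\<not> neg'"
    then show ?thesis
      using px_shift_inject[OF _ b b', of c c'] eq act_V_H_map_False by simp
  next
    assume "neg" "\<not> neg'"
    then show ?thesis
      using px_shift_neq_px_reflect[of b' c' b c] eq act_V_H_map_False act_V_H_map_True by auto
  next
    assume "\<not> neg" "neg'"
    then show ?thesis
      using px_shift_neq_px_reflect[of b c b' c'] eq act_V_H_map_False act_V_H_map_True by auto
  qed
  then show ?thesis
    using H_map_cong[OF r_pos] by blast
qed

theorem act_sV_inject:
  assumes g: "g \<in> H_grp r" and g': "g' \<in> H_grp r"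
    and eq: "\<forall>p\<in>sPX_V r s. act_sV r g p = act_sV r g' p"
  shows "g = g'"
proof -
  obtain neg b c neg' b' c' where "b < r" "b' < r" "g = H_map r neg b c" "g' = H_map r neg' b' c'"
    using g g' by (auto simp: mem_H_grp_iff)
  moreover have "act_V r g v = act_V r g' v" if v: "v \<in> PX_V r s" for v
  proof -
    have "(v, cyc_out r v) \<in> sPX_V r s"
      using mem_sPX_V_pair[OF v] by blast
    then have "act_sV r g (v, cyc_out r v) = act_sV r g' (v, cyc_out r v)"
      using eq by blast
    then show ?thesis
      by (simp add: act_sV_def)
  qed
  ultimately show ?thesis
    using H_map_inject_on_V by blast
qed

lemma PX_arc_from: "v \<in> PX_V r s \<Longrightarrow> \<exists>u. PX_arc r s v u"
  using r_pos s_pos by (intro exI[of _ "((fst v + 1) mod r, tl (snd v) @ [False])"]) (simp add: PX_arc_iff PX_V_iff)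

lemma PX_arc_to: "v \<in> PX_V r s \<Longrightarrow> \<exists>u. PX_arc r s u v"
  using r_pos s_pos mod_pred_Suc[OF r_pos]
  by (intro exI[of _ "((fst v + r - 1) mod r, False # butlast (snd v))"]) (simp add: PX_arc_iff PX_V_iff)

lemma is_PX_S_aut_image_cyc_out:
  assumes G: "is_PX_S_aut r s G" and arc: "PX_arc r s u w"
  shows "(\<lambda>e. G ` e) ` cyc_out r u = (if PX_arc r s (G u) (G w) then cyc_out r (G u) else cyc_in r (G u))"
proof -
  let ?D = "(\<lambda>e. G ` e) ` cyc_out r u"
  have u: "u \<in> PX_V r s" and w: "w \<in> PX_V r s"
    using arc by (auto simp: PX_arc_iff)
  have Gu: "G u \<in> PX_V r s" and D: "?D \<in> PX_S r s" and adj: "PX_adj r s (G u) (G w)"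
    using G u w arc cyc_out_in_PX_S[OF u] unfolding is_PX_S_aut_def PX_adj_def by blast+
  have "G u \<in> \<Union>?D" and Gw: "G w \<in> \<Union>?D"
    using mem_cyc_out[OF u] mem_cyc_in[OF w] PX_arc_cyc_out_eq_cyc_in[OF arc] by blast+
  then consider "?D = cyc_out r (G u)" | "?D = cyc_in r (G u)"
    using PX_S_cases[OF D Gu] by blast
  then show ?thesis
  proof cases
    case 1
    then show ?thesis
      using PX_arc_if_adj_in_cyc_out[OF Gu _ adj] Gw by simp
  next
    case 2
    then show ?thesis
      using PX_arc_if_adj_in_cyc_in[OF Gu _ adj] Gw PX_arc_asym by auto
  qed
qed

lemma is_PX_S_aut_image_cyc_in:
  assumes G: "is_PX_S_aut r s G" and arc: "PX_arc r s u w"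
  shows "(\<lambda>e. G ` e) ` cyc_in r w = (if PX_arc r s (G u) (G w) then cyc_in r (G w) else cyc_out r (G w))"
proof -
  have "PX_adj r s (G u) (G w)"
    using G arc unfolding is_PX_S_aut_def PX_adj_def PX_arc_iff by blast
  then show ?thesis
    using is_PX_S_aut_image_cyc_out[OF G arc] PX_arc_cyc_out_eq_cyc_in[of "G u" "G w"]
      PX_arc_cyc_out_eq_cyc_in[of "G w" "G u"] PX_arc_cyc_out_eq_cyc_in[OF arc]
    unfolding PX_adj_def by auto
qed

lemma snd_act_sV_H_map:
  fixes neg :: bool and c :: "nat \<Rightarrow> bool"
  assumes b: "b < r" and v: "v \<in> PX_V r s"
  defines "g \<equiv> H_map r neg b c"
  shows "snd (act_sV r g (v, cyc_out r v)) =
      (if neg then cyc_in r (act_V r g v) else cyc_out r (act_V r g v))"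
    and "snd (act_sV r g (v, cyc_in r v)) =
      (if neg then cyc_out r (act_V r g v) else cyc_in r (act_V r g v))"
proof -
  have G: "is_PX_S_aut r s (act_V r g)"
    using b is_PX_S_aut_act_V unfolding g_def mem_H_grp_iff by blast
  have orientation: "PX_arc r s (act_V r g u) (act_V r g w) \<longleftrightarrow> \<not> neg" if arc: "PX_arc r s u w" for u w
  proof -
    have u: "u \<in> PX_V r s" and w: "w \<in> PX_V r s"
      using arc by (auto simp: PX_arc_iff)
    show ?thesis
      using arc px_shift_arc_iff[OF u w] px_reflect_arc_iff[OF u w] PX_arc_asym
        act_V_H_map_False[OF u] act_V_H_map_False[OF w] act_V_H_map_True[OF u] act_V_H_map_True[OF w]
      unfolding g_def by (cases neg) auto
  qed
  obtain u w where "PX_arc r s v u" and "PX_arc r s w v"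
    using PX_arc_from[OF v] PX_arc_to[OF v] by blast
  then show "snd (act_sV r g (v, cyc_out r v)) =
      (if neg then cyc_in r (act_V r g v) else cyc_out r (act_V r g v))"
    and "snd (act_sV r g (v, cyc_in r v)) =
      (if neg then cyc_out r (act_V r g v) else cyc_in r (act_V r g v))"
    using is_PX_S_aut_image_cyc_out[OF G] is_PX_S_aut_image_cyc_in[OF G] orientation
    by (simp_all add: act_sV_def)
qed

lemma H_map_False_maps_to:
  assumes s_le: "s \<le> r" and v: "v \<in> PX_V r s" and w: "w \<in> PX_V r s"
  obtains b c where "b < r" and "act_V r (H_map r False b c) v = w"
proof -
  obtain x e y e' where v_eq: "v = (x, e)" and w_eq: "w = (y, e')"
    by fastforce
  then have x: "x < r" and y: "y < r" and e: "length e = s" and e': "length e' = s"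
    using v w by auto
  obtain c where c: "flip_bits r c x e = e'"
    using flip_bits_surj[OF x] e e' s_le by auto
  have "(x + (y + r - x)) mod r = y"
    using x y by (simp add: mod_add_right_eq[symmetric])
  then have "act_V r (H_map r False ((y + r - x) mod r) c) v = w"
    using act_V_H_map_False[OF v] c by (simp add: px_shift_def v_eq w_eq mod_simps)
  moreover have "(y + r - x) mod r < r"
    using r_pos by simp
  ultimately show ?thesis
    using that by blast
qed

lemma H_map_True_maps_to:
  assumes s_le: "s \<le> r" and v: "v \<in> PX_V r s" and w: "w \<in> PX_V r s"
  obtains b c where "b < r" and "act_V r (H_map r True b c) v = w"
proof -
  obtain x e y e' where v_eq: "v = (x, e)" and w_eq: "w = (y, e')"
    by fastforce
  then have x: "x < r" and y: "y < r" and e: "length e = s" and e': "length e' = s"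
    using v w by auto
  obtain c where c: "flip_bits r c x e = rev e'"
    using flip_bits_surj[OF x] e e' s_le by (metis length_rev)
  define b where "b = (y + (x + s - 1)) mod r"
  have "(r - (x + s - 1) mod r + b) mod r = y
      \<longleftrightarrow> int r dvd ((int b - int (x + s - 1)) - int y)"
    using r_pos by (intro level_eq_iff_dvd int_reflect_mod int_eq_mod_if_less[OF y])
  moreover have "int r dvd (int b - (int y + int (x + s - 1)))"
    unfolding b_def by (rule dvd_diff_of_eq_mod) (simp add: zmod_int)
  ultimately have "(r - (x + s - 1) mod r + b) mod r = y"
    by (simp add: algebra_simps)
  then have "act_V r (H_map r True b c) v = w"
    using act_V_H_map_True[OF v] c e by (simp add: px_reflect_def v_eq w_eq)
  moreover have "b < r"
    using r_pos by (simp add: b_def)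
  ultimately show ?thesis
    using that by blast
qed

theorem act_sV_transitive:
  assumes s_le: "s \<le> r" and p: "p \<in> sPX_V r s" and q: "q \<in> sPX_V r s"
  shows "\<exists>g\<in>H_grp r. act_sV r g p = q"
proof -
  obtain v C w D where p_eq: "p = (v, C)" and q_eq: "q = (w, D)"
    by fastforce
  have v: "v \<in> PX_V r s" and w: "w \<in> PX_V r s"
    using fst_in_PX_V[OF p] fst_in_PX_V[OF q] by (simp_all add: p_eq q_eq)
  have C: "C = cyc_out r v \<or> C = cyc_in r v" and D: "D = cyc_out r w \<or> D = cyc_in r w"
    using mem_sPX_V_pair[OF v] mem_sPX_V_pair[OF w] p q by (simp_all add: p_eq q_eq)
  obtain b0 c0 where b0: "b0 < r" and g0: "act_V r (H_map r False b0 c0) v = w"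
    using H_map_False_maps_to[OF s_le v w] .
  obtain b1 c1 where b1: "b1 < r" and g1: "act_V r (H_map r True b1 c1) v = w"
    using H_map_True_maps_to[OF s_le v w] .
  have "act_sV r (H_map r False b0 c0) p = q" if "C = cyc_out r v \<longleftrightarrow> D = cyc_out r w"
    using that C D g0 snd_act_sV_H_map[OF b0 v, of False c0] cyc_out_neq_cyc_in[OF w]
    by (auto simp: p_eq q_eq act_sV_def)
  moreover have "act_sV r (H_map r True b1 c1) p = q" if "\<not> (C = cyc_out r v \<longleftrightarrow> D = cyc_out r w)"
    using that C D g1 snd_act_sV_H_map[OF b1 v, of True c1] cyc_out_neq_cyc_in[OF w]
    by (auto simp: p_eq q_eq act_sV_def)
  moreover have "H_map r False b0 c0 \<in> H_grp r" and "H_map r True b1 c1 \<in> H_grp r"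
    using b0 b1 unfolding mem_H_grp_iff by blast+
  ultimately show ?thesis
    by blast
qed

end

theorem lemma2p12:
  fixes r s :: nat
  assumes "r \<ge> 3" and "1 \<le> s" and "s \<le> r - 1"
  shows "(\<forall>g\<in>H_grp r. is_aut (sPX_V r s) (sPX_adj r s) (act_sV r g))
    \<and> (\<forall>f. is_aut (sPX_V r s) (sPX_adj r s) f \<longrightarrow>
           (\<exists>g\<in>H_grp r. \<forall>p\<in>sPX_V r s. f p = act_sV r g p))
    \<and> (\<forall>g\<in>H_grp r. \<forall>g'\<in>H_grp r.
           (\<forall>p\<in>sPX_V r s. act_sV r g p = act_sV r g' p) \<longrightarrow> g = g')
    \<and> (\<forall>p\<in>sPX_V r s. \<forall>q\<in>sPX_V r s. \<exists>g\<in>H_grp r. act_sV r g p = q)"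
proof -
  interpret praeger_xu r s
    using assms by unfold_locales
  have "\<exists>g\<in>H_grp r. \<forall>p\<in>sPX_V r s. f p = act_sV r g p"
    if "is_aut (sPX_V r s) (sPX_adj r s) f" for f
  proof -
    interpret sPX_aut r s f
      using that by unfold_locales
    show ?thesis
      by (rule eq_act_sV)
  qed
  moreover have "s \<le> r"
    using assms by simp
  ultimately show ?thesis
    using is_aut_act_sV act_sV_inject act_sV_transitive by blast
qed

end
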